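(* Let $p\ge 3$ be an integer and let $\lambda\ge 0$. For each $n\ge1$, let $\theta_0\in\mathbb S^{n-1}$, let $Z$ be a random $p$-tensor in $(\mathbb R^n)^{\otimes p}$ with i.i.d. $\mathcal N(0,1)$ entries, and set $Y=\lambda\sqrt n\,\theta_0^{\otimes p}+Z$. Let $\Pi$ be the uniform probability measure on $\mathbb S^{n-1}$ and let the posterior be $d\Pi(\theta\mid Y)=\mathcal Z_Y^{-1}\exp\big(\tfrac12\sqrt n\lambda\langle\theta^{\otimes p},Y\rangle\big)\,d\Pi(\theta)$. Then there exist $\lambda_0>0$ and a function $s(\lambda)\in[0,1)$ with $s(\lambda)\to1$ as $\lambda\to\infty$ such that for all $\lambda\ge\lambda_0$, \[\lim_{n\to\infty}\Pi(\mathcal T_{s(\lambda)}\mid Y)=1\quad\text{almost surely.}\]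
   Context: $\mathbb S^{n-1}=\{\theta\in\mathbb R^n:\|\theta\|_2=1\}$; $\mathcal Z_Y$ is the normalising constant. If $p$ is even, $\mathcal T_t=\{\theta\in\mathbb S^{n-1}:|\langle\theta,\theta_0\rangle|>t\}$; if $p$ is odd, $\mathcal T_t=\{\theta\in\mathbb S^{n-1}:\langle\theta,\theta_0\rangle>t\}$. *)

theory Defs
  imports "HOL-Probability.Probability"
begin

text \<open>Vectors in R^n are functions nat => real; only the coordinates i < n matter.
  Points of the measurable space are extensional functions on {..<n} (PiM convention).\<close>

definition sqnorm :: "nat \<Rightarrow> (nat \<Rightarrow> real) \<Rightarrow> real" where
  "sqnorm n x = (\<Sum>i<n. (x i)\<^sup>2)"

definition inner_n :: "nat \<Rightarrow> (nat \<Rightarrow> real) \<Rightarrow> (nat \<Rightarrow> real) \<Rightarrow> real" where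
  "inner_n n x y = (\<Sum>i<n. x i * y i)"

definition sphere_n :: "nat \<Rightarrow> (nat \<Rightarrow> real) set" where
  "sphere_n n = {x. x \<in> extensional {..<n} \<and> sqnorm n x = 1}"

definition normalize_n :: "nat \<Rightarrow> (nat \<Rightarrow> real) \<Rightarrow> (nat \<Rightarrow> real)" where
  "normalize_n n x = (\<lambda>i\<in>{..<n}. x i / sqrt (sqnorm n x))"

definition lebesgue_n :: "nat \<Rightarrow> (nat \<Rightarrow> real) measure" where
  "lebesgue_n n = PiM {..<n} (\<lambda>_. lborel)"

text \<open>Uniform (normalised surface) probability measure on S^{n-1}: the image of the
  uniform distribution on the closed unit ball under radial projection x \<mapsto> x/|x|
  (equivalently, Pi(A) = vol(cone over A in the ball) / vol(ball)).\<close>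
definition unif_sphere :: "nat \<Rightarrow> (nat \<Rightarrow> real) measure" where
  "unif_sphere n =
     distr (uniform_measure (lebesgue_n n) {x \<in> space (lebesgue_n n). sqnorm n x \<le> 1})
           (restrict_space (PiM {..<n} (\<lambda>_. borel)) (sphere_n n))
           (normalize_n n)"

definition tensor_idx :: "nat \<Rightarrow> nat \<Rightarrow> nat list set" where
  "tensor_idx p n = {xs. length xs = p \<and> set xs \<subseteq> {..<n}}"

definition tpow :: "nat \<Rightarrow> (nat \<Rightarrow> real) \<Rightarrow> nat list \<Rightarrow> real" where
  "tpow p \<theta> xs = (\<Prod>j<p. \<theta> (xs ! j))"

definition tensor_inner :: "nat \<Rightarrow> nat \<Rightarrow> (nat \<Rightarrow> real) \<Rightarrow> (nat list \<Rightarrow> real) \<Rightarrow> real" where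
  "tensor_inner p n \<theta> T = (\<Sum>xs\<in>tensor_idx p n. tpow p \<theta> xs * T xs)"

definition obs :: "nat \<Rightarrow> nat \<Rightarrow> real \<Rightarrow> (nat \<Rightarrow> real) \<Rightarrow> (nat list \<Rightarrow> real) \<Rightarrow> (nat list \<Rightarrow> real)" where
  "obs p n lam \<theta>0 Z = (\<lambda>xs. lam * sqrt (real n) * tpow p \<theta>0 xs + Z xs)"

definition posterior :: "nat \<Rightarrow> nat \<Rightarrow> real \<Rightarrow> (nat list \<Rightarrow> real) \<Rightarrow> (nat \<Rightarrow> real) set \<Rightarrow> real" where
  "posterior p n lam Y A =
     (let w = (\<lambda>\<theta>. exp (1/2 * sqrt (real n) * lam * tensor_inner p n \<theta> Y))
      in (\<integral>\<theta>. indicator A \<theta> * w \<theta> \<partial>unif_sphere n) / (\<integral>\<theta>. w \<theta> \<partial>unif_sphere n))"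

definition T_set :: "nat \<Rightarrow> nat \<Rightarrow> (nat \<Rightarrow> real) \<Rightarrow> real \<Rightarrow> (nat \<Rightarrow> real) set" where
  "T_set p n \<theta>0 t =
     (if even p then {\<theta> \<in> sphere_n n. \<bar>inner_n n \<theta> \<theta>0\<bar> > t}
      else {\<theta> \<in> sphere_n n. inner_n n \<theta> \<theta>0 > t})"

end

theory Submission
  imports Defs "HOL-Real_Asymp.Real_Asymp"
begin

text \<open>
  Up to normalisation the posterior density of \<open>\<theta>\<close> is
  \<open>exp (n (\<lambda>\<^sup>2/2 \<langle>\<theta>,\<theta>0\<rangle>\<^sup>p + \<lambda>/(2 sqrt n) Z(\<theta>,...,\<theta>)))\<close>, so everything rests on a
  uniform bound for the noise: almost surely, for all large \<open>n\<close>, the injective norm of \<open>Z\<close> is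
  at most \<open>C\<^sub>p sqrt n\<close>. This is a first-moment argument. The exponential moment
  \<open>F(Z) = E exp (sqrt n Z(x\<^sub>1,...,x\<^sub>p))\<close> over independent uniform points \<open>x\<^sub>j\<close> of the sphere has
  Gaussian mean \<open>exp (n/2)\<close>, so Markov's inequality and Borel-Cantelli give
  \<open>F(Z) \<le> exp (3n/2)\<close> eventually. Conversely, the multilinear form is Lipschitz with
  constant its own norm, so a large value at \<open>(\<theta>\<^sub>1,...,\<theta>\<^sub>p)\<close> persists on the product of the
  caps of radius \<open>1/(2p)\<close> around the \<open>\<theta>\<^sub>j\<close>, whose measure is at least \<open>(40p)\<^sup>-\<^sup>n\<^sup>p\<close>.

  Given the noise bound, the complement of \<open>T\<^sub>s\<close> carries weight at most
  \<open>exp (n (\<lambda>\<^sup>2 s\<^sup>p/2 + \<lambda>C/2))\<close>, while the cap of radius \<open>\<delta>\<close> around \<open>\<theta>0\<close> carries at least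
  \<open>(\<delta>/20)\<^sup>n exp (n (\<lambda>\<^sup>2 (1 - \<delta>\<^sup>2/2)\<^sup>p/2 - \<lambda>C/2))\<close>. For \<open>s = 1 - 1/sqrt (\<lambda>+1)\<close> and
  \<open>\<delta> = 1/sqrt (p(\<lambda>+1))\<close> the gap between the two exponents is of order \<open>\<lambda>\<^sup>3\<^sup>/\<^sup>2\<close>, which beats
  the linear terms once \<open>\<lambda>\<close> is large, so the posterior mass outside \<open>T\<^sub>s\<close> decays
  exponentially in \<open>n\<close>.
\<close>

section \<open>Tensors and multilinear forms\<close>

lemma tensor_idx_0: "tensor_idx 0 n = {[]}"
  by (auto simp: tensor_idx_def)

lemma tensor_idx_Suc: "tensor_idx (Suc p) n = (\<lambda>(i, xs). i # xs) ` ({..<n} \<times> tensor_idx p n)"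
proof (rule set_eqI)
  fix ys
  show "ys \<in> tensor_idx (Suc p) n \<longleftrightarrow> ys \<in> (\<lambda>(i, xs). i # xs) ` ({..<n} \<times> tensor_idx p n)"
    by (cases ys) (auto simp: tensor_idx_def)
qed

lemma finite_tensor_idx [simp]: "finite (tensor_idx p n)"
  by (induction p) (auto simp: tensor_idx_0 tensor_idx_Suc)

lemma tensor_idx_nth_less: "xs \<in> tensor_idx p n \<Longrightarrow> j < p \<Longrightarrow> xs ! j < n"
  by (auto simp: tensor_idx_def dest!: nth_mem)

lemma sum_tensor_idx_prod:
  "(\<Sum>xs\<in>tensor_idx p n. \<Prod>j<p. f j (xs ! j)) = (\<Prod>j<p. \<Sum>i<n. (f j i :: real))"
proof (induction p arbitrary: f)
  case 0
  then show ?case by (simp add: tensor_idx_0)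
next
  case (Suc p)
  have inj: "inj_on (\<lambda>(i, xs). i # xs) ({..<n} \<times> tensor_idx p n)"
    by (auto simp: inj_on_def)
  have "(\<Sum>xs\<in>tensor_idx (Suc p) n. \<Prod>j<Suc p. f j (xs ! j))
      = (\<Sum>(i, xs)\<in>{..<n} \<times> tensor_idx p n. f 0 i * (\<Prod>j<p. f (Suc j) (xs ! j)))"
    unfolding tensor_idx_Suc
    by (subst sum.reindex[OF inj]) (simp add: case_prod_unfold prod.lessThan_Suc_shift del: prod.lessThan_Suc)
  also have "\<dots> = (\<Sum>i<n. f 0 i) * (\<Prod>j<p. \<Sum>i<n. f (Suc j) i)"
    by (simp add: sum.cartesian_product[symmetric] sum_distrib_left[symmetric] sum_distrib_right
        Suc.IH[of "\<lambda>j. f (Suc j)"])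
  also have "\<dots> = (\<Prod>j<Suc p. \<Sum>i<n. f j i)"
    by (simp add: prod.lessThan_Suc_shift del: prod.lessThan_Suc)
  finally show ?case .
qed

definition multilin :: "nat \<Rightarrow> nat \<Rightarrow> (nat list \<Rightarrow> real) \<Rightarrow> (nat \<Rightarrow> nat \<Rightarrow> real) \<Rightarrow> real" where
  "multilin p n T x = (\<Sum>xs\<in>tensor_idx p n. (\<Prod>j<p. x j (xs ! j)) * T xs)"

lemma multilin_cong:
  "(\<And>j i. j < p \<Longrightarrow> i < n \<Longrightarrow> x j i = y j i) \<Longrightarrow> multilin p n T x = multilin p n T y"
  unfolding multilin_def
  by (intro sum.cong refl arg_cong2[where f = "(*)"] prod.cong) (auto intro: tensor_idx_nth_less)

lemma tensor_inner_eq_multilin: "tensor_inner p n \<theta> T = multilin p n T (\<lambda>_. \<theta>)"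
  by (simp add: tensor_inner_def multilin_def tpow_def)

lemma tensor_inner_tpow: "tensor_inner p n \<theta> (tpow p \<theta>0) = (inner_n n \<theta> \<theta>0) ^ p"
  using sum_tensor_idx_prod[of "\<lambda>_ i. \<theta> i * \<theta>0 i" p n]
  by (simp add: tensor_inner_def tpow_def inner_n_def prod.distrib)

lemma tensor_inner_obs:
  "tensor_inner p n \<theta> (obs p n lam \<theta>0 T)
     = lam * sqrt (real n) * (inner_n n \<theta> \<theta>0) ^ p + tensor_inner p n \<theta> T"
  by (simp add: tensor_inner_def obs_def algebra_simps sum.distrib sum_distrib_left
      flip: tensor_inner_tpow)

lemma sum_tensor_idx_prod_square:
  "(\<Sum>xs\<in>tensor_idx p n. (\<Prod>j<p. x j (xs ! j))\<^sup>2) = (\<Prod>j<p. sqnorm n (x j))"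
  using sum_tensor_idx_prod[of "\<lambda>j i. (x j i)\<^sup>2" p n] by (simp add: prod_power_distrib sqnorm_def)

lemma multilin_scale: "multilin p n T (\<lambda>j i. c j * x j i) = (\<Prod>j<p. c j) * multilin p n T x"
  unfolding multilin_def by (simp add: prod.distrib sum_distrib_left mult.assoc)

lemma prod_fun_upd_nth:
  assumes "k < p"
  shows "(\<Prod>j<p. (x(k := a)) j (xs ! j)) = a (xs ! k) * (\<Prod>j\<in>{..<p} - {k}. x j (xs ! j))"
proof -
  have "(\<Prod>j<p. (x(k := a)) j (xs ! j)) = a (xs ! k) * (\<Prod>j\<in>{..<p} - {k}. (x(k := a)) j (xs ! j))"
    using assms by (subst prod.remove[of _ k]) auto
  also have "(\<Prod>j\<in>{..<p} - {k}. (x(k := a)) j (xs ! j)) = (\<Prod>j\<in>{..<p} - {k}. x j (xs ! j))"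
    by (rule prod.cong) auto
  finally show ?thesis .
qed

lemma multilin_upd_diff:
  assumes "k < p"
  shows "multilin p n T (x(k := a)) - multilin p n T (x(k := b))
       = multilin p n T (x(k := (\<lambda>i. a i - b i)))"
  unfolding multilin_def prod_fun_upd_nth[OF assms]
  by (simp add: sum_subtractf[symmetric] algebra_simps)

section \<open>Norms of vectors and of tensors\<close>

lemma sqnorm_nonneg: "0 \<le> sqnorm n x"
  by (simp add: sqnorm_def sum_nonneg)

lemma coord_square_le_sqnorm: "i < n \<Longrightarrow> (x i)\<^sup>2 \<le> sqnorm n x"
  unfolding sqnorm_def by (rule member_le_sum) auto

lemma sqnorm_diff_sphere:
  assumes "sqnorm n \<theta> = 1" "sqnorm n \<theta>0 = 1"
  shows "sqnorm n (\<lambda>i. \<theta> i - \<theta>0 i) = 2 - 2 * inner_n n \<theta> \<theta>0"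
proof -
  have "sqnorm n (\<lambda>i. \<theta> i - \<theta>0 i) = sqnorm n \<theta> + sqnorm n \<theta>0 - 2 * inner_n n \<theta> \<theta>0"
    by (simp add: sqnorm_def inner_n_def power2_diff sum.distrib sum_subtractf sum_distrib_left mult.assoc)
  then show ?thesis using assms by simp
qed

definition norm_n :: "nat \<Rightarrow> (nat \<Rightarrow> real) \<Rightarrow> real" where
  "norm_n n x = L2_set x {..<n}"

lemma norm_n_eq_sqrt: "norm_n n x = sqrt (sqnorm n x)"
  by (simp add: norm_n_def L2_set_def sqnorm_def)

lemma norm_n_nonneg: "0 \<le> norm_n n x"
  by (simp add: norm_n_def)

lemma norm_n_square: "(norm_n n x)\<^sup>2 = sqnorm n x"
  by (simp add: norm_n_eq_sqrt sqnorm_nonneg)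

lemma norm_n_le_1_iff: "norm_n n x \<le> 1 \<longleftrightarrow> sqnorm n x \<le> 1"
  by (simp add: norm_n_eq_sqrt)

lemma norm_n_triangle: "norm_n n (\<lambda>i. x i + y i) \<le> norm_n n x + norm_n n y"
  unfolding norm_n_def by (rule L2_set_triangle_ineq)

lemma norm_n_scale: "norm_n n (\<lambda>i. c * x i) = \<bar>c\<bar> * norm_n n x"
  unfolding norm_n_def L2_set_def
  by (simp add: power_mult_distrib real_sqrt_mult flip: sum_distrib_left)

lemma norm_n_cong: "(\<And>i. i < n \<Longrightarrow> x i = y i) \<Longrightarrow> norm_n n x = norm_n n y"
  unfolding norm_n_def by (rule L2_set_cong) auto

lemma abs_norm_n_diff_le: "\<bar>norm_n n x - norm_n n y\<bar> \<le> norm_n n (\<lambda>i. x i - y i)"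
proof -
  define d where "d = (\<lambda>i. x i - y i)"
  have "norm_n n x = norm_n n (\<lambda>i. d i + y i)"
    by (rule norm_n_cong) (simp add: d_def)
  then have "norm_n n x \<le> norm_n n d + norm_n n y"
    using norm_n_triangle[of n d y] by linarith
  moreover have "norm_n n y = norm_n n (\<lambda>i. x i + (-1) * d i)"
    by (rule norm_n_cong) (simp add: d_def)
  then have "norm_n n y \<le> norm_n n x + norm_n n d"
    using norm_n_triangle[of n x "\<lambda>i. (-1) * d i"] norm_n_scale[of n "-1" d] by simp
  ultimately show ?thesis
    unfolding d_def[symmetric] by linarith
qed

lemma norm_n_le_sqrt_bound:
  assumes "\<And>i. i < n \<Longrightarrow> \<bar>x i\<bar> \<le> h"
  shows "norm_n n x \<le> sqrt (real n) * h"
proof (cases "n = 0")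
  case False
  then have h: "0 \<le> h" using assms[of 0] by auto
  have "sqnorm n x \<le> (\<Sum>i<n. h\<^sup>2)"
    unfolding sqnorm_def using assms by (intro sum_mono) (metis abs_ge_zero lessThan_iff power2_abs power_mono)
  then have "norm_n n x \<le> sqrt (real n * h\<^sup>2)" by (simp add: norm_n_eq_sqrt)
  also have "\<dots> = sqrt (real n) * h" using h by (simp add: real_sqrt_mult)
  finally show ?thesis .
qed (simp add: norm_n_def)

definition basis0 :: "nat \<Rightarrow> nat \<Rightarrow> real" where
  "basis0 n = (\<lambda>i\<in>{..<n}. if i = 0 then 1 else 0)"

text \<open>The radial projection normalize_n sends the origin to itself, off the sphere;
  proj_sphere sends it to basis0 instead.\<close>

definition proj_sphere :: "nat \<Rightarrow> (nat \<Rightarrow> real) \<Rightarrow> nat \<Rightarrow> real" where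
  "proj_sphere n x = (if sqnorm n x = 0 then basis0 n else normalize_n n x)"

lemma sqnorm_basis0:
  assumes "n \<ge> 1"
  shows "sqnorm n (basis0 n) = 1"
proof -
  have "sqnorm n (basis0 n) = (\<Sum>i<n. if i = 0 then 1 else 0)"
    unfolding sqnorm_def basis0_def by (rule sum.cong) auto
  then show ?thesis using assms by simp
qed


lemma sqnorm_normalize_n:
  assumes "sqnorm n x \<noteq> 0"
  shows "sqnorm n (normalize_n n x) = 1"
proof -
  have "sqnorm n (normalize_n n x) = (\<Sum>i<n. (x i / sqrt (sqnorm n x))\<^sup>2)"
    unfolding normalize_n_def by (subst (1) sqnorm_def) (intro sum.cong; auto)
  also have "\<dots> = (\<Sum>i<n. (x i)\<^sup>2 / sqnorm n x)"
    using sqnorm_nonneg[of n x] by (simp add: power_divide)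
  also have "\<dots> = 1"
    using assms by (simp add: sum_divide_distrib[symmetric] sqnorm_def)
  finally show ?thesis .
qed

lemma proj_sphere_in_sphere: "n \<ge> 1 \<Longrightarrow> proj_sphere n x \<in> sphere_n n"
  using sqnorm_basis0[of n] sqnorm_normalize_n[of n x]
  by (auto simp: proj_sphere_def sphere_n_def basis0_def normalize_n_def)

lemma sqnorm_proj_sphere_le_1: "sqnorm n (proj_sphere n x) \<le> 1"
  using proj_sphere_in_sphere[of n x] by (cases "n = 0") (auto simp: sqnorm_def sphere_n_def)

lemma norm_n_mult_proj_sphere:
  assumes "i < n"
  shows "norm_n n x * proj_sphere n x i = x i"
proof (cases "sqnorm n x = 0")
  case True
  then have "x i = 0" using coord_square_le_sqnorm[OF assms, of x] by simp
  with True show ?thesis by (simp add: norm_n_eq_sqrt)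
next
  case False
  then have "sqrt (sqnorm n x) > 0" using sqnorm_nonneg[of n x] by simp
  with False assms show ?thesis by (simp add: proj_sphere_def normalize_n_def norm_n_eq_sqrt)
qed

lemma prod_norm_n_le_1:
  "(\<And>j. j \<in> A \<Longrightarrow> sqnorm n (x j) \<le> 1) \<Longrightarrow> (\<Prod>j\<in>A. norm_n n (x j)) \<le> 1"
  by (rule prod_le_1) (simp add: norm_n_nonneg norm_n_le_1_iff)

definition unit_balls :: "nat \<Rightarrow> nat \<Rightarrow> (nat \<Rightarrow> nat \<Rightarrow> real) set" where
  "unit_balls p n = {x. \<forall>j<p. sqnorm n (x j) \<le> 1}"

definition tensor_opnorm :: "nat \<Rightarrow> nat \<Rightarrow> (nat list \<Rightarrow> real) \<Rightarrow> real" where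
  "tensor_opnorm p n T = (SUP x\<in>unit_balls p n. \<bar>multilin p n T x\<bar>)"

lemma abs_multilin_le_sum_abs:
  assumes x: "x \<in> unit_balls p n"
  shows "\<bar>multilin p n T x\<bar> \<le> (\<Sum>xs\<in>tensor_idx p n. \<bar>T xs\<bar>)"
proof -
  have coord: "\<bar>x j i\<bar> \<le> 1" if "j < p" "i < n" for j i
  proof -
    have "(x j i)\<^sup>2 \<le> 1"
      using coord_square_le_sqnorm[OF that(2), of "x j"] x that(1) by (auto simp: unit_balls_def)
    then show ?thesis by (simp add: abs_square_le_1)
  qed
  have "\<bar>multilin p n T x\<bar> \<le> (\<Sum>xs\<in>tensor_idx p n. \<bar>(\<Prod>j<p. x j (xs ! j)) * T xs\<bar>)"
    unfolding multilin_def by (rule sum_abs)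
  also have "\<dots> \<le> (\<Sum>xs\<in>tensor_idx p n. \<bar>T xs\<bar>)"
  proof (rule sum_mono)
    fix xs assume xs: "xs \<in> tensor_idx p n"
    have "\<bar>\<Prod>j<p. x j (xs ! j)\<bar> \<le> 1"
      unfolding abs_prod using coord tensor_idx_nth_less[OF xs] by (intro prod_le_1) auto
    then show "\<bar>(\<Prod>j<p. x j (xs ! j)) * T xs\<bar> \<le> \<bar>T xs\<bar>"
      by (simp add: abs_mult mult_left_le_one_le)
  qed
  finally show ?thesis .
qed

lemma abs_multilin_le_tensor_opnorm:
  "x \<in> unit_balls p n \<Longrightarrow> \<bar>multilin p n T x\<bar> \<le> tensor_opnorm p n T"
  unfolding tensor_opnorm_def
  by (rule cSup_upper) (auto intro!: bdd_aboveI abs_multilin_le_sum_abs)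

lemma zero_in_unit_balls: "(\<lambda>_ _. 0) \<in> unit_balls p n"
  by (simp add: unit_balls_def sqnorm_def)

lemma tensor_opnorm_nonneg: "0 \<le> tensor_opnorm p n T"
  using abs_multilin_le_tensor_opnorm[OF zero_in_unit_balls] by (rule order_trans[rotated]) simp

lemma tensor_opnorm_le:
  "(\<And>x. x \<in> unit_balls p n \<Longrightarrow> \<bar>multilin p n T x\<bar> \<le> B) \<Longrightarrow> tensor_opnorm p n T \<le> B"
  unfolding tensor_opnorm_def by (rule cSup_least) (use zero_in_unit_balls in auto)

lemma multilin_eq_prod_norm_n:
  "multilin p n T x = (\<Prod>j<p. norm_n n (x j)) * multilin p n T (\<lambda>j. proj_sphere n (x j))"
  by (subst multilin_scale[symmetric]) (rule multilin_cong, simp add: norm_n_mult_proj_sphere)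

lemma abs_multilin_le_tensor_opnorm_prod:
  "\<bar>multilin p n T x\<bar> \<le> tensor_opnorm p n T * (\<Prod>j<p. norm_n n (x j))"
proof -
  have "(\<lambda>j. proj_sphere n (x j)) \<in> unit_balls p n"
    by (simp add: unit_balls_def sqnorm_proj_sphere_le_1)
  then have "\<bar>multilin p n T (\<lambda>j. proj_sphere n (x j))\<bar> \<le> tensor_opnorm p n T"
    by (rule abs_multilin_le_tensor_opnorm)
  then have "\<bar>multilin p n T (\<lambda>j. proj_sphere n (x j))\<bar> * (\<Prod>j<p. norm_n n (x j))
               \<le> tensor_opnorm p n T * (\<Prod>j<p. norm_n n (x j))"
    by (rule mult_right_mono) (simp add: prod_nonneg norm_n_nonneg)
  then show ?thesis
    by (subst multilin_eq_prod_norm_n) (simp add: abs_mult abs_prod norm_n_nonneg mult.commute)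
qed

lemma tensor_opnorm_le_of_sphere:
  assumes "n \<ge> 1" "p \<ge> 1"
    and B: "\<And>x. (\<And>j. j < p \<Longrightarrow> sqnorm n (x j) = 1) \<Longrightarrow> multilin p n T x \<le> B"
  shows "tensor_opnorm p n T \<le> B"
proof -
  have abs_le: "\<bar>multilin p n T x\<bar> \<le> B" if x: "\<And>j. j < p \<Longrightarrow> sqnorm n (x j) = 1" for x
  proof -
    define c :: "nat \<Rightarrow> real" where "c j = (if j = 0 then -1 else 1)" for j
    obtain q where q: "p = Suc q" using \<open>p \<ge> 1\<close> by (cases p) auto
    have "multilin p n T (\<lambda>j i. c j * x j i) = - multilin p n T x"
      unfolding multilin_scale by (simp add: q prod.lessThan_Suc_shift c_def del: prod.lessThan_Suc)
    moreover have "sqnorm n (\<lambda>i. c j * x j i) = sqnorm n (x j)" for j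
      by (simp add: sqnorm_def c_def power_mult_distrib)
    then have "multilin p n T (\<lambda>j i. c j * x j i) \<le> B"
      by (intro B) (simp add: x)
    moreover have "multilin p n T x \<le> B"
      using x by (rule B)
    ultimately show ?thesis by linarith
  qed
  show ?thesis
  proof (rule tensor_opnorm_le)
    fix x assume x: "x \<in> unit_balls p n"
    let ?y = "\<lambda>j. proj_sphere n (x j)"
    have y: "\<bar>multilin p n T ?y\<bar> \<le> B"
      using proj_sphere_in_sphere[OF \<open>n \<ge> 1\<close>] by (intro abs_le) (simp add: sphere_n_def)
    have "(\<Prod>j<p. norm_n n (x j)) \<le> 1"
      using x by (intro prod_norm_n_le_1) (simp add: unit_balls_def)
    then have "\<bar>multilin p n T x\<bar> \<le> 1 * B"
      unfolding multilin_eq_prod_norm_n[of p n T x] abs_mult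
      using y by (intro mult_mono) (auto simp: prod_nonneg norm_n_nonneg)
    then show "\<bar>multilin p n T x\<bar> \<le> B" by simp
  qed
qed

lemma multilin_lipschitz:
  assumes x: "x \<in> unit_balls p n" and y: "y \<in> unit_balls p n"
  shows "multilin p n T x
           \<le> multilin p n T y + tensor_opnorm p n T * (\<Sum>k<p. norm_n n (\<lambda>i. x k i - y k i))"
proof -
  define H where "H k = (\<lambda>j. if j < k then y j else x j)" for k
  have step: "multilin p n T (H k) - multilin p n T (H (Suc k))
                \<le> tensor_opnorm p n T * norm_n n (\<lambda>i. x k i - y k i)" if k: "k < p" for k
  proof -
    define d where "d = (\<lambda>i. x k i - y k i)"
    have "H k = (H k)(k := x k)" "H (Suc k) = (H k)(k := y k)"
      by (auto simp: H_def fun_eq_iff)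
    then have "multilin p n T (H k) - multilin p n T (H (Suc k)) = multilin p n T ((H k)(k := d))"
      using multilin_upd_diff[OF k, of n T "H k" "x k" "y k"] by (simp add: d_def)
    also have "\<dots> \<le> tensor_opnorm p n T * (\<Prod>j<p. norm_n n (((H k)(k := d)) j))"
      using abs_multilin_le_tensor_opnorm_prod by (rule abs_le_D1)
    also have "(\<Prod>j<p. norm_n n (((H k)(k := d)) j)) = norm_n n d * (\<Prod>j\<in>{..<p} - {k}. norm_n n (H k j))"
      using k by (subst prod.remove[of _ k]) (auto intro!: prod.cong)
    also have "\<dots> \<le> norm_n n d"
      using x y by (intro mult_left_le prod_norm_n_le_1 norm_n_nonneg) (auto simp: H_def unit_balls_def)
    finally show ?thesis
      using tensor_opnorm_nonneg by (simp add: d_def mult_left_mono)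
  qed
  have "multilin p n T (H 0) - multilin p n T (H p)
          = (\<Sum>k<p. multilin p n T (H k) - multilin p n T (H (Suc k)))"
    by (rule sum_lessThan_telescope'[symmetric])
  also have "\<dots> \<le> (\<Sum>k<p. tensor_opnorm p n T * norm_n n (\<lambda>i. x k i - y k i))"
    by (rule sum_mono) (use step in auto)
  moreover have "H 0 = x" "multilin p n T (H p) = multilin p n T y"
    by (auto simp: H_def intro: multilin_cong)
  ultimately show ?thesis
    by (simp add: sum_distrib_left)
qed

section \<open>The uniform measure on the sphere\<close>

lemma product_sigma_finite_lborel: "product_sigma_finite (\<lambda>_::nat. lborel)"
  by (simp add: product_sigma_finite_def lborel.sigma_finite_measure_axioms)

lemma sets_lebesgue_n: "sets (lebesgue_n n) = sets (PiM {..<n} (\<lambda>_. borel))"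
  unfolding lebesgue_n_def by (rule sets_PiM_cong) auto

lemma space_lebesgue_n: "space (lebesgue_n n) = PiE {..<n} (\<lambda>_. UNIV)"
  unfolding lebesgue_n_def by (simp add: space_PiM)

lemma sqnorm_borel_measurable [measurable]:
  "sqnorm n \<in> borel_measurable (PiM {..<n} (\<lambda>_. borel))"
  unfolding sqnorm_def[abs_def] by measurable

lemma sqnorm_borel_measurable_lebesgue_n [measurable]: "sqnorm n \<in> borel_measurable (lebesgue_n n)"
  using sqnorm_borel_measurable measurable_cong_sets[OF sets_lebesgue_n refl] by blast

definition ball_n :: "nat \<Rightarrow> (nat \<Rightarrow> real) set" where
  "ball_n n = {x \<in> space (lebesgue_n n). sqnorm n x \<le> 1}"

lemma ball_n_sets [measurable]: "ball_n n \<in> sets (lebesgue_n n)"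
  unfolding ball_n_def by measurable

definition sphere_space :: "nat \<Rightarrow> (nat \<Rightarrow> real) measure" where
  "sphere_space n = restrict_space (PiM {..<n} (\<lambda>_. borel)) (sphere_n n)"

lemma sphere_n_subset_space: "sphere_n n \<subseteq> space (PiM {..<n} (\<lambda>_. borel))"
  by (auto simp: sphere_n_def space_PiM PiE_def)

lemma space_sphere_space: "space (sphere_space n) = sphere_n n"
  using sphere_n_subset_space[of n] by (auto simp: sphere_space_def space_restrict_space)

lemma proj_sphere_measurable:
  assumes n: "n \<ge> 1"
  shows "proj_sphere n \<in> lebesgue_n n \<rightarrow>\<^sub>M sphere_space n"
  unfolding sphere_space_def
proof (rule measurable_restrict_space2)
  show "proj_sphere n \<in> space (lebesgue_n n) \<rightarrow> sphere_n n"
    using proj_sphere_in_sphere[OF n] by auto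
  have "proj_sphere n \<in> PiM {..<n} (\<lambda>_. borel) \<rightarrow>\<^sub>M PiM {..<n} (\<lambda>_. borel)"
  proof (rule measurable_PiM_single')
    fix i assume i: "i \<in> {..<n}"
    have "(\<lambda>x. proj_sphere n x i)
            = (\<lambda>x. if sqnorm n x = 0 then basis0 n i else x i / sqrt (sqnorm n x))"
      using i by (auto simp: proj_sphere_def normalize_n_def fun_eq_iff)
    also have "\<dots> \<in> borel_measurable (PiM {..<n} (\<lambda>_. borel))"
      using i by measurable
    finally show "(\<lambda>x. proj_sphere n x i) \<in> borel_measurable (PiM {..<n} (\<lambda>_. borel))" .
  next
    show "proj_sphere n \<in> space (PiM {..<n} (\<lambda>_. borel)) \<rightarrow> (\<Pi>\<^sub>E i\<in>{..<n}. space borel)"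
      using proj_sphere_in_sphere[OF n] sphere_n_subset_space[of n] by (auto simp: space_PiM)
  qed
  then show "proj_sphere n \<in> lebesgue_n n \<rightarrow>\<^sub>M PiM {..<n} (\<lambda>_. borel)"
    using measurable_cong_sets[OF sets_lebesgue_n refl] by blast
qed

text \<open>Every point of this box, of side \<open>\<delta> / (4 sqrt n)\<close> around \<open>\<theta> / 2\<close>, lies in the unit
  ball and projects into the \<open>\<delta>\<close>-cap around \<open>\<theta>\<close>; comparing its volume with that of the
  ball bounds the uniform measure of caps from below.\<close>

definition half_box :: "nat \<Rightarrow> (nat \<Rightarrow> real) \<Rightarrow> real \<Rightarrow> (nat \<Rightarrow> real) set" where
  "half_box n \<theta> \<delta> =
     PiE {..<n} (\<lambda>i. {\<theta> i / 2 - \<delta> / (8 * sqrt (real n)) .. \<theta> i / 2 + \<delta> / (8 * sqrt (real n))})"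

lemma half_box_sets [measurable]: "half_box n \<theta> \<delta> \<in> sets (lebesgue_n n)"
  unfolding half_box_def lebesgue_n_def by (rule sets_PiM_I_finite) auto

lemma emeasure_half_box:
  assumes n: "n \<ge> 1" and d: "\<delta> > 0"
  shows "emeasure (lebesgue_n n) (half_box n \<theta> \<delta>) = ennreal ((\<delta> / (4 * sqrt (real n))) ^ n)"
proof -
  have sn: "sqrt (real n) > 0" using n by simp
  have "emeasure (lebesgue_n n) (half_box n \<theta> \<delta>) =
     (\<Prod>i<n. emeasure lborel
        {\<theta> i / 2 - \<delta> / (8 * sqrt (real n)) .. \<theta> i / 2 + \<delta> / (8 * sqrt (real n))})"
    unfolding half_box_def lebesgue_n_def
    by (rule product_sigma_finite.emeasure_PiM[OF product_sigma_finite_lborel]) auto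
  also have "\<dots> = (\<Prod>i<n. ennreal (\<delta> / (4 * sqrt (real n))))"
    using sn d by (intro prod.cong refl) (simp add: field_simps)
  finally show ?thesis
    using sn d by (simp add: prod_ennreal ennreal_power)
qed

lemma norm_n_half_box_diff_le:
  assumes n: "n \<ge> 1" and x: "x \<in> half_box n \<theta> \<delta>"
  shows "norm_n n (\<lambda>i. x i - (1/2) * \<theta> i) \<le> \<delta> / 8"
proof -
  have "\<bar>x i - (1/2) * \<theta> i\<bar> \<le> \<delta> / (8 * sqrt (real n))" if "i < n" for i
  proof -
    have "x i \<in> {\<theta> i / 2 - \<delta> / (8 * sqrt (real n)) .. \<theta> i / 2 + \<delta> / (8 * sqrt (real n))}"
      using x that unfolding half_box_def by blast
    then show ?thesis by (simp add: abs_le_iff)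
  qed
  then have "norm_n n (\<lambda>i. x i - (1/2) * \<theta> i) \<le> sqrt (real n) * (\<delta> / (8 * sqrt (real n)))"
    by (rule norm_n_le_sqrt_bound)
  also have "\<dots> = \<delta> / 8"
    using n by simp
  finally show ?thesis .
qed

lemma half_box_geometry:
  assumes n: "n \<ge> 1" and \<theta>: "sqnorm n \<theta> = 1" and \<delta>: "0 < \<delta>" "\<delta> \<le> 1"
    and x: "x \<in> half_box n \<theta> \<delta>"
  shows "x \<in> ball_n n" and "sqnorm n (\<lambda>i. proj_sphere n x i - \<theta> i) \<le> \<delta>\<^sup>2"
proof -
  define d where "d = (\<lambda>i. x i - (1/2) * \<theta> i)"
  have d_le: "norm_n n d \<le> \<delta> / 8"
    unfolding d_def by (rule norm_n_half_box_diff_le[OF n x])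
  have norm_\<theta>: "norm_n n \<theta> = 1"
    using \<theta> by (simp add: norm_n_eq_sqrt)
  then have "norm_n n (\<lambda>i. (1/2) * \<theta> i) = 1/2"
    by (simp only: norm_n_scale)
  then have dist: "\<bar>norm_n n x - 1/2\<bar> \<le> norm_n n d"
    using abs_norm_n_diff_le[of n x "\<lambda>i. (1/2) * \<theta> i"] unfolding d_def by simp
  then have x_ge: "3/8 \<le> norm_n n x" and x_le: "norm_n n x \<le> 1"
    using d_le \<delta> unfolding abs_le_iff by linarith+
  have "x \<in> space (lebesgue_n n)"
    using x by (auto simp: half_box_def space_lebesgue_n PiE_iff)
  with x_le show "x \<in> ball_n n"
    by (simp add: ball_n_def norm_n_le_1_iff)
  have proj: "proj_sphere n x i = x i / norm_n n x" if "i < n" for i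
    using norm_n_mult_proj_sphere[OF that, of x] x_ge by (simp add: field_simps)
  have "norm_n n (\<lambda>i. proj_sphere n x i - \<theta> i)
          = norm_n n (\<lambda>i. (1 / norm_n n x) * (d i + (1/2 - norm_n n x) * \<theta> i))"
    using x_ge by (intro norm_n_cong) (simp add: proj d_def field_simps)
  also have "\<dots> = (1 / norm_n n x) * norm_n n (\<lambda>i. d i + (1/2 - norm_n n x) * \<theta> i)"
    by (subst norm_n_scale) (use x_ge in simp)
  also have "\<dots> \<le> (1 / norm_n n x) * (norm_n n d + \<bar>1/2 - norm_n n x\<bar>)"
  proof (rule mult_left_mono)
    have "norm_n n (\<lambda>i. (1/2 - norm_n n x) * \<theta> i) = \<bar>1/2 - norm_n n x\<bar>"
      by (simp only: norm_n_scale norm_\<theta> mult_1_right)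
    then show "norm_n n (\<lambda>i. d i + (1/2 - norm_n n x) * \<theta> i) \<le> norm_n n d + \<bar>1/2 - norm_n n x\<bar>"
      using norm_n_triangle[of n d "\<lambda>i. (1/2 - norm_n n x) * \<theta> i"] by linarith
  qed (use x_ge in simp)
  also have "\<dots> \<le> (8/3) * (\<delta>/8 + \<delta>/8)"
  proof (rule mult_mono)
    show "1 / norm_n n x \<le> 8/3"
      using x_ge by (simp add: divide_le_eq)
    have "\<bar>1/2 - norm_n n x\<bar> \<le> norm_n n d"
      using dist by (simp only: abs_minus_commute)
    then show "norm_n n d + \<bar>1/2 - norm_n n x\<bar> \<le> \<delta>/8 + \<delta>/8"
      using d_le by linarith
  qed (use \<delta> norm_n_nonneg in auto)
  finally have "norm_n n (\<lambda>i. proj_sphere n x i - \<theta> i) \<le> \<delta>"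
    using \<delta> by simp
  then show "sqnorm n (\<lambda>i. proj_sphere n x i - \<theta> i) \<le> \<delta>\<^sup>2"
    by (metis norm_n_nonneg norm_n_square power_mono)
qed

lemma nn_integral_gaussian_scaled:
  assumes n: "n \<ge> 1"
  shows "(\<integral>\<^sup>+ y. ennreal (exp (- (real n / 2) * y\<^sup>2)) \<partial>lborel) = ennreal (sqrt (2 * pi / real n))"
proof -
  have eq: "exp (- (real n / 2) * y\<^sup>2)
              = sqrt (2 * pi / real n) * normal_density 0 (1 / sqrt (real n)) y" for y
    using n by (simp add: normal_density_def power_divide real_sqrt_divide field_simps)
  have "(\<integral>\<^sup>+ y. ennreal (exp (- (real n / 2) * y\<^sup>2)) \<partial>lborel)
      = ennreal (sqrt (2 * pi / real n))
          * (\<integral>\<^sup>+ y. ennreal (normal_density 0 (1 / sqrt (real n)) y) \<partial>lborel)"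
    unfolding eq by (simp add: ennreal_mult nn_integral_cmult)
  also have "(\<integral>\<^sup>+ y. ennreal (normal_density 0 (1 / sqrt (real n)) y) \<partial>lborel) = 1"
    using integrable_normal_density[of "1 / sqrt (real n)" 0]
      integral_normal_density[of "1 / sqrt (real n)" 0] n
    by (subst nn_integral_eq_integral) auto
  finally show ?thesis by simp
qed

text \<open>Gaussian comparison: \<open>1 \<le> exp (n/2 - n |x|\<^sup>2/2)\<close> on the unit ball.\<close>

lemma emeasure_ball_n_le:
  assumes n: "n \<ge> 1"
  shows "emeasure (lebesgue_n n) (ball_n n) \<le> ennreal ((sqrt (2 * pi * exp 1 / real n)) ^ n)"
proof -
  let ?L = "lebesgue_n n"
  let ?g = "\<lambda>y. ennreal (exp (- (real n / 2) * y\<^sup>2))"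
  have "emeasure ?L (ball_n n) = (\<integral>\<^sup>+ x. indicator (ball_n n) x \<partial>?L)" by simp
  also have "\<dots> \<le> (\<integral>\<^sup>+ x. ennreal (exp (real n / 2)) * (\<Prod>i<n. ?g (x i)) \<partial>?L)"
  proof (rule nn_integral_mono)
    fix x assume "x \<in> space ?L"
    have prod_eq: "(\<Prod>i<n. ?g (x i)) = ennreal (exp (- (real n / 2) * sqnorm n x))"
      by (simp add: prod_ennreal exp_sum[symmetric] sqnorm_def sum_distrib_left)
    show "indicator (ball_n n) x \<le> ennreal (exp (real n / 2)) * (\<Prod>i<n. ?g (x i))"
    proof (cases "x \<in> ball_n n")
      case True
      then have "real n / 2 * sqnorm n x \<le> real n / 2"
        by (simp add: ball_n_def mult_left_le)
      then have "1 \<le> exp (real n / 2) * exp (- (real n / 2) * sqnorm n x)"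
        by (simp add: exp_add[symmetric])
      then show ?thesis
        using True unfolding prod_eq by (simp add: ennreal_mult[symmetric] ennreal_leI)
    qed simp
  qed
  also have "\<dots> = ennreal (exp (real n / 2)) * (\<Prod>i<n. \<integral>\<^sup>+ y. ?g y \<partial>lborel)"
    unfolding lebesgue_n_def
    by (subst nn_integral_cmult, simp,
        subst product_sigma_finite.product_nn_integral_prod[OF product_sigma_finite_lborel]) auto
  also have "\<dots> = ennreal (exp (real n / 2)) * ennreal ((sqrt (2 * pi / real n)) ^ n)"
    by (subst nn_integral_gaussian_scaled[OF n]) (simp add: ennreal_power)
  also have "\<dots> = ennreal ((sqrt (2 * pi * exp 1 / real n)) ^ n)"
  proof -
    have "sqrt (exp 1) = exp (1/2)"
      by (rule real_sqrt_unique) (simp_all add: exp_of_nat_mult[symmetric, of 2] power2_eq_square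
          exp_add[symmetric])
    then have "exp (real n / 2) = (sqrt (exp 1)) ^ n"
      by (simp add: exp_of_nat_mult[symmetric])
    then show ?thesis
      by (simp add: ennreal_mult[symmetric] power_mult_distrib[symmetric] real_sqrt_mult[symmetric]
          mult.commute mult.left_commute)
  qed
  finally show ?thesis .
qed

lemma emeasure_ball_n_pos: 
  assumes n: "n \<ge> 1"
  shows "emeasure (lebesgue_n n) (ball_n n) > 0"
proof -
  have "half_box n (basis0 n) 1 \<subseteq> ball_n n"
    using half_box_geometry(1)[OF n sqnorm_basis0[OF n], of 1] by auto
  then have "emeasure (lebesgue_n n) (half_box n (basis0 n) 1) \<le> emeasure (lebesgue_n n) (ball_n n)"
    by (intro emeasure_mono) auto
  moreover have "emeasure (lebesgue_n n) (half_box n (basis0 n) 1) > 0"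
    using n by (simp add: emeasure_half_box)
  ultimately show ?thesis by simp
qed

lemma origin_null_lebesgue_n:
  assumes n: "n \<ge> 1"
  shows "{x \<in> space (lebesgue_n n). sqnorm n x = 0} \<in> null_sets (lebesgue_n n)"
proof -
  have eq: "{x \<in> space (lebesgue_n n). sqnorm n x = 0} = PiE {..<n} (\<lambda>_. {0})"
  proof (rule set_eqI)
    fix x
    have "sqnorm n x = 0 \<longleftrightarrow> (\<forall>i<n. x i = 0)"
      unfolding sqnorm_def by (subst sum_nonneg_eq_0_iff) auto
    then show "x \<in> {x \<in> space (lebesgue_n n). sqnorm n x = 0} \<longleftrightarrow> x \<in> PiE {..<n} (\<lambda>_. {0})"
      by (auto simp: space_lebesgue_n PiE_def Pi_def extensional_def)
  qed
  have "emeasure (lebesgue_n n) (PiE {..<n} (\<lambda>_. {0})) = (\<Prod>i<n. emeasure lborel {0::real})"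
    unfolding lebesgue_n_def
    by (rule product_sigma_finite.emeasure_PiM[OF product_sigma_finite_lborel]) auto
  also have "\<dots> = 0" using n by simp
  moreover have "PiE {..<n} (\<lambda>_. {0::real}) \<in> sets (lebesgue_n n)"
    unfolding lebesgue_n_def by (rule sets_PiM_I_finite) auto
  ultimately show ?thesis
    unfolding eq by (simp add: null_sets_def)
qed

lemma unif_sphere_eq_distr_proj_sphere:
  assumes n: "n \<ge> 1"
  shows "unif_sphere n = distr (uniform_measure (lebesgue_n n) (ball_n n)) (sphere_space n) (proj_sphere n)"
proof -
  let ?U = "uniform_measure (lebesgue_n n) (ball_n n)"
  let ?Z = "{x \<in> space (lebesgue_n n). sqnorm n x = 0}"
  have proj: "proj_sphere n \<in> ?U \<rightarrow>\<^sub>M sphere_space n"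
    using proj_sphere_measurable[OF n] measurable_cong_sets[OF sets_uniform_measure refl] by blast
  have Z_sets: "?Z \<in> sets (lebesgue_n n)" by measurable
  have "emeasure (lebesgue_n n) (ball_n n \<inter> ?Z) = 0"
    using origin_null_lebesgue_n[OF n] by (rule null_sets_subset[THEN null_setsD1]) auto
  then have Z_null: "?Z \<in> null_sets ?U"
    using Z_sets by (simp add: null_sets_def emeasure_uniform_measure)
  show ?thesis
    unfolding unif_sphere_def distr_def ball_n_def[symmetric] sphere_space_def[symmetric]
  proof (rule measure_of_eq)
    show "sets (sphere_space n) \<subseteq> Pow (space (sphere_space n))" by (rule sets.space_closed)
    fix A assume "A \<in> sigma_sets (space (sphere_space n)) (sets (sphere_space n))"
    then have A: "A \<in> sets (sphere_space n)" by (simp add: sets.sigma_sets_eq)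
    have A_sphere: "A \<subseteq> sphere_n n"
      using sets.sets_into_space[OF A] by (simp add: space_sphere_space)
    have "normalize_n n -` A \<inter> space ?U = (proj_sphere n -` A \<inter> space ?U) - ?Z"
    proof (rule set_eqI)
      fix x
      show "x \<in> normalize_n n -` A \<inter> space ?U \<longleftrightarrow> x \<in> (proj_sphere n -` A \<inter> space ?U) - ?Z"
      proof (cases "sqnorm n x = 0")
        case True
        have "sqnorm n (normalize_n n x) = 0"
          using True unfolding sqnorm_def normalize_n_def
          by (subst sum.cong[OF refl, where h = "\<lambda>_. 0"]) auto
        then have "normalize_n n x \<notin> A" using A_sphere by (auto simp: sphere_n_def)
        then show ?thesis using True by auto
      qed (auto simp: proj_sphere_def)
    qed
    then show "emeasure ?U (normalize_n n -` A \<inter> space ?U) = emeasure ?U (proj_sphere n -` A \<inter> space ?U)"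
      using emeasure_Diff_null_set[OF Z_null measurable_sets[OF proj A]] by simp
  qed
qed

lemma sets_unif_sphere: "sets (unif_sphere n) = sets (sphere_space n)"
  by (simp add: unif_sphere_def sphere_space_def)

lemma space_unif_sphere: "space (unif_sphere n) = sphere_n n"
  using space_sphere_space[of n] by (simp add: unif_sphere_def sphere_space_def)

lemma emeasure_unif_sphere:
  assumes n: "n \<ge> 1" and A: "A \<in> sets (sphere_space n)"
  shows "emeasure (unif_sphere n) A
           = emeasure (lebesgue_n n) (proj_sphere n -` A \<inter> ball_n n) / emeasure (lebesgue_n n) (ball_n n)"
proof -
  let ?U = "uniform_measure (lebesgue_n n) (ball_n n)"
  have proj: "proj_sphere n \<in> ?U \<rightarrow>\<^sub>M sphere_space n"
    using proj_sphere_measurable[OF n] measurable_cong_sets[OF sets_uniform_measure refl] by blast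
  have pre: "proj_sphere n -` A \<inter> space (lebesgue_n n) \<in> sets (lebesgue_n n)"
    using measurable_sets[OF proj_sphere_measurable[OF n] A] .
  have "emeasure (unif_sphere n) A = emeasure ?U (proj_sphere n -` A \<inter> space ?U)"
    unfolding unif_sphere_eq_distr_proj_sphere[OF n] by (rule emeasure_distr[OF proj A])
  also have "\<dots> = emeasure (lebesgue_n n) (ball_n n \<inter> (proj_sphere n -` A \<inter> space (lebesgue_n n)))
                    / emeasure (lebesgue_n n) (ball_n n)"
    by (simp add: emeasure_uniform_measure pre)
  also have "ball_n n \<inter> (proj_sphere n -` A \<inter> space (lebesgue_n n)) = proj_sphere n -` A \<inter> ball_n n"
    by (auto simp: ball_n_def)
  finally show ?thesis .
qed

lemma prob_space_unif_sphere: "n \<ge> 1 \<Longrightarrow> prob_space (unif_sphere n)"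
proof
  assume n: "n \<ge> 1"
  have sphere: "sphere_n n \<in> sets (sphere_space n)"
    using sets.top[of "sphere_space n"] by (simp add: space_sphere_space)
  have "proj_sphere n -` sphere_n n \<inter> ball_n n = ball_n n"
    using proj_sphere_in_sphere[OF n] by auto
  moreover have "emeasure (lebesgue_n n) (ball_n n) < \<infinity>"
    using emeasure_ball_n_le[OF n] by (rule le_less_trans) simp
  ultimately show "emeasure (unif_sphere n) (space (unif_sphere n)) = 1"
    using emeasure_ball_n_pos[OF n]
    by (simp add: space_unif_sphere emeasure_unif_sphere[OF n sphere] ennreal_divide_self)
qed

lemma coord_measurable_unif_sphere: "(\<lambda>u. u i) \<in> borel_measurable (unif_sphere n)"
proof -
  have "(\<lambda>u. u i) \<in> borel_measurable (sphere_space n)"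
  proof (cases "i < n")
    case True
    then show ?thesis
      unfolding sphere_space_def by (intro measurable_restrict_space1) simp
  next
    case False
    then have "(\<lambda>u. u i) \<in> borel_measurable (sphere_space n)
                 \<longleftrightarrow> (\<lambda>u. undefined :: real) \<in> borel_measurable (sphere_space n)"
      by (intro measurable_cong) (auto simp: space_sphere_space sphere_n_def extensional_def)
    then show ?thesis by simp
  qed
  then show ?thesis
    using measurable_cong_sets[OF sets_unif_sphere refl] by blast
qed

definition cap :: "nat \<Rightarrow> (nat \<Rightarrow> real) \<Rightarrow> real \<Rightarrow> (nat \<Rightarrow> real) set" where
  "cap n \<theta> \<delta> = {u \<in> sphere_n n. sqnorm n (\<lambda>i. u i - \<theta> i) \<le> \<delta>\<^sup>2}"

lemma cap_sets [measurable]: "cap n \<theta> \<delta> \<in> sets (unif_sphere n)"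
proof -
  note coord_measurable_unif_sphere [measurable]
  have "{u \<in> space (unif_sphere n). sqnorm n (\<lambda>i. u i - \<theta> i) \<le> \<delta>\<^sup>2} \<in> sets (unif_sphere n)"
    unfolding sqnorm_def by measurable
  then show ?thesis by (simp add: cap_def space_unif_sphere)
qed

lemma inner_n_ge_of_cap:
  assumes "\<theta> \<in> cap n \<theta>0 \<delta>" "sqnorm n \<theta>0 = 1"
  shows "1 - \<delta>\<^sup>2 / 2 \<le> inner_n n \<theta> \<theta>0"
  using assms sqnorm_diff_sphere[of n \<theta> \<theta>0] by (auto simp: cap_def sphere_n_def)

lemma sqrt_2_pi_e_le_5: "sqrt (2 * pi * exp 1) \<le> 5"
proof -
  have "2 * pi * exp 1 \<le> 2 * 4 * 3"
    using pi_less_4 exp_le by (intro mult_mono) auto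
  then have "sqrt (2 * pi * exp 1) \<le> sqrt (5\<^sup>2)" by (intro real_sqrt_le_mono) simp
  then show ?thesis by simp
qed

lemma emeasure_cap_ge:
  assumes n: "n \<ge> 1" and \<theta>: "sqnorm n \<theta> = 1" and \<delta>: "0 < \<delta>" "\<delta> \<le> 1"
  shows "ennreal ((\<delta> / 20) ^ n) \<le> emeasure (unif_sphere n) (cap n \<theta> \<delta>)"
proof -
  let ?L = "lebesgue_n n"
  have cap: "cap n \<theta> \<delta> \<in> sets (sphere_space n)"
    using cap_sets sets_unif_sphere by blast
  obtain V where V: "emeasure ?L (ball_n n) = ennreal V" "V > 0"
    using emeasure_ball_n_pos[OF n] emeasure_ball_n_le[OF n]
    by (metis ennreal_cases ennreal_less_zero_iff infinity_ennreal_def top.not_eq_extremum top_unique)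
  have V_le: "V \<le> (sqrt (2 * pi * exp 1 / real n)) ^ n"
    using emeasure_ball_n_le[OF n] V by (simp add: ennreal_le_iff2)
  have "half_box n \<theta> \<delta> \<subseteq> proj_sphere n -` cap n \<theta> \<delta> \<inter> ball_n n"
    using half_box_geometry[OF n \<theta> \<delta>] proj_sphere_in_sphere[OF n] by (auto simp: cap_def)
  moreover have "proj_sphere n -` cap n \<theta> \<delta> \<inter> ball_n n \<in> sets ?L"
  proof -
    have "proj_sphere n -` cap n \<theta> \<delta> \<inter> ball_n n = (proj_sphere n -` cap n \<theta> \<delta> \<inter> space ?L) \<inter> ball_n n"
      by (auto simp: ball_n_def)
    then show ?thesis
      using measurable_sets[OF proj_sphere_measurable[OF n] cap] by auto
  qed
  ultimately have "emeasure ?L (half_box n \<theta> \<delta>) \<le> emeasure ?L (proj_sphere n -` cap n \<theta> \<delta> \<inter> ball_n n)"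
    by (rule emeasure_mono)
  then have "ennreal ((\<delta> / (4 * sqrt (real n))) ^ n) / ennreal V \<le> emeasure (unif_sphere n) (cap n \<theta> \<delta>)"
    unfolding emeasure_unif_sphere[OF n cap] V(1) emeasure_half_box[OF n \<delta>(1)]
    by (rule divide_right_mono_ennreal)
  also have "ennreal ((\<delta> / (4 * sqrt (real n))) ^ n) / ennreal V = ennreal ((\<delta> / (4 * sqrt (real n))) ^ n / V)"
    using V(2) \<delta> by (intro divide_ennreal) auto
  finally have cap_ge: "ennreal ((\<delta> / (4 * sqrt (real n))) ^ n / V) \<le> emeasure (unif_sphere n) (cap n \<theta> \<delta>)" .
  have "(\<delta> / 20) ^ n * V \<le> (\<delta> / (4 * sqrt (real n))) ^ n"
  proof -
    have "(\<delta> / 20) ^ n * V \<le> (\<delta> / 20) ^ n * (sqrt (2 * pi * exp 1 / real n)) ^ n"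
      using V_le \<delta> by (intro mult_left_mono) auto
    also have "\<dots> = (\<delta> * sqrt (2 * pi * exp 1) / (20 * sqrt (real n))) ^ n"
      by (simp add: power_mult_distrib[symmetric] real_sqrt_divide)
    also have "\<dots> \<le> (\<delta> / (4 * sqrt (real n))) ^ n"
      using sqrt_2_pi_e_le_5 \<delta> n by (intro power_mono) (auto simp: divide_simps)
    finally show ?thesis .
  qed
  then have "(\<delta> / 20) ^ n \<le> (\<delta> / (4 * sqrt (real n))) ^ n / V"
    using V(2) by (simp add: le_divide_eq)
  then show ?thesis
    using cap_ge by (rule ennreal_leI[THEN order_trans])
qed

section \<open>Exponential moments of Gaussian multilinear forms\<close>

lemma nn_integral_std_normal_exp:
  "(\<integral>\<^sup>+ x. ennreal (std_normal_density x) * ennreal (exp (a * x)) \<partial>lborel) = ennreal (exp (a\<^sup>2 / 2))"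
proof -
  have eq: "std_normal_density x * exp (a * x) = exp (a\<^sup>2 / 2) * normal_density a 1 x" for x
  proof -
    have "exp (- x\<^sup>2 / 2) * exp (a * x) = exp (a\<^sup>2 / 2) * exp (- (x - a)\<^sup>2 / 2)"
      by (simp add: exp_add[symmetric] power2_diff field_simps)
    then show ?thesis by (simp add: std_normal_density_def normal_density_def)
  qed
  have "(\<integral>\<^sup>+ x. ennreal (std_normal_density x) * ennreal (exp (a * x)) \<partial>lborel)
      = (\<integral>\<^sup>+ x. ennreal (exp (a\<^sup>2 / 2)) * ennreal (normal_density a 1 x) \<partial>lborel)"
    by (rule nn_integral_cong) (simp add: ennreal_mult[symmetric] eq)
  also have "\<dots> = ennreal (exp (a\<^sup>2 / 2)) * (\<integral>\<^sup>+ x. ennreal (normal_density a 1 x) \<partial>lborel)"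
    by (rule nn_integral_cmult) simp
  also have "(\<integral>\<^sup>+ x. ennreal (normal_density a 1 x) \<partial>lborel) = 1"
    using integrable_normal_density[of 1 a] integral_normal_density[of 1 a]
    by (subst nn_integral_eq_integral) auto
  finally show ?thesis by simp
qed

lemma (in prob_space) nn_integral_exp_gaussian_sum:
  assumes fin: "finite I" and ind: "indep_vars (\<lambda>_. borel) X I"
    and std: "\<And>i. i \<in> I \<Longrightarrow> distributed M lborel (X i) std_normal_density"
  shows "(\<integral>\<^sup>+ \<omega>. ennreal (exp (\<Sum>i\<in>I. c i * X i \<omega>)) \<partial>M) = ennreal (exp ((\<Sum>i\<in>I. (c i)\<^sup>2) / 2))"
proof -
  have "(\<integral>\<^sup>+ \<omega>. ennreal (exp (\<Sum>i\<in>I. c i * X i \<omega>)) \<partial>M)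
          = (\<integral>\<^sup>+ \<omega>. (\<Prod>i\<in>I. ennreal (exp (c i * X i \<omega>))) \<partial>M)"
    using fin by (simp add: exp_sum prod_ennreal)
  also have "\<dots> = (\<Prod>i\<in>I. \<integral>\<^sup>+ \<omega>. ennreal (exp (c i * X i \<omega>)) \<partial>M)"
  proof (rule indep_vars_nn_integral[OF fin])
    show "indep_vars (\<lambda>_. borel) (\<lambda>i \<omega>. ennreal (exp (c i * X i \<omega>))) I"
      by (rule indep_vars_compose2[OF ind]) measurable
  qed simp
  also have "\<dots> = (\<Prod>i\<in>I. ennreal (exp ((c i)\<^sup>2 / 2)))"
  proof (rule prod.cong[OF refl])
    fix i assume i: "i \<in> I"
    have "(\<integral>\<^sup>+ \<omega>. ennreal (exp (c i * X i \<omega>)) \<partial>M)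
            = (\<integral>\<^sup>+ x. ennreal (std_normal_density x) * ennreal (exp (c i * x)) \<partial>lborel)"
      by (rule distributed_nn_integral[OF std[OF i], symmetric]) measurable
    then show "(\<integral>\<^sup>+ \<omega>. ennreal (exp (c i * X i \<omega>)) \<partial>M) = ennreal (exp ((c i)\<^sup>2 / 2))"
      by (simp add: nn_integral_std_normal_exp)
  qed
  also have "\<dots> = ennreal (exp ((\<Sum>i\<in>I. (c i)\<^sup>2) / 2))"
    using fin by (simp add: prod_ennreal exp_sum sum_divide_distrib)
  finally show ?thesis .
qed

definition sphere_tuples :: "nat \<Rightarrow> nat \<Rightarrow> (nat \<Rightarrow> nat \<Rightarrow> real) measure" where
  "sphere_tuples p n = PiM {..<p} (\<lambda>_. unif_sphere n)"

definition partition_fun :: "nat \<Rightarrow> nat \<Rightarrow> (nat list \<Rightarrow> real) \<Rightarrow> ennreal" where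
  "partition_fun p n T = (\<integral>\<^sup>+ x. ennreal (exp (sqrt (real n) * multilin p n T x)) \<partial>sphere_tuples p n)"

lemma prob_space_sphere_tuples: "n \<ge> 1 \<Longrightarrow> prob_space (sphere_tuples p n)"
  unfolding sphere_tuples_def by (rule prob_space_PiM) (rule prob_space_unif_sphere)

lemma space_sphere_tuples: "x \<in> space (sphere_tuples p n) \<Longrightarrow> j < p \<Longrightarrow> x j \<in> sphere_n n"
  by (auto simp: sphere_tuples_def space_PiM PiE_iff space_unif_sphere)

lemma coord_measurable_sphere_tuples:
  "(\<lambda>x. x j i) \<in> borel_measurable (sphere_tuples p n)"
proof (cases "j < p")
  case True
  have "(\<lambda>x. x j) \<in> sphere_tuples p n \<rightarrow>\<^sub>M unif_sphere n"
    unfolding sphere_tuples_def using True by (intro measurable_component_singleton) auto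
  then show ?thesis
    using coord_measurable_unif_sphere by (rule measurable_compose)
next
  case False
  then have "(\<lambda>x. x j i) \<in> borel_measurable (sphere_tuples p n)
               \<longleftrightarrow> (\<lambda>x. (undefined :: nat \<Rightarrow> real) i) \<in> borel_measurable (sphere_tuples p n)"
    by (intro measurable_cong) (auto simp: sphere_tuples_def space_PiM PiE_def extensional_def)
  then show ?thesis by simp
qed

lemma multilin_measurable_pair:
  assumes Z: "\<And>xs. xs \<in> tensor_idx p n \<Longrightarrow> (\<lambda>\<omega>. Z \<omega> xs) \<in> borel_measurable M"
  shows "(\<lambda>z. multilin p n (Z (fst z)) (snd z)) \<in> borel_measurable (M \<Otimes>\<^sub>M sphere_tuples p n)"
  unfolding multilin_def
proof (rule borel_measurable_sum)
  fix xs assume xs: "xs \<in> tensor_idx p n"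
  note Z[OF xs, measurable] coord_measurable_sphere_tuples [measurable]
  show "(\<lambda>z. (\<Prod>j<p. snd z j (xs ! j)) * Z (fst z) xs) \<in> borel_measurable (M \<Otimes>\<^sub>M sphere_tuples p n)"
    by measurable
qed

lemma nn_integral_partition_fun:
  assumes M: "prob_space M" and n: "n \<ge> 1"
    and ind: "prob_space.indep_vars M (\<lambda>_. borel) (\<lambda>xs \<omega>. Z \<omega> xs) (tensor_idx p n)"
    and std: "\<And>xs. xs \<in> tensor_idx p n \<Longrightarrow> distributed M lborel (\<lambda>\<omega>. Z \<omega> xs) std_normal_density"
  shows "(\<integral>\<^sup>+ \<omega>. partition_fun p n (Z \<omega>) \<partial>M) = ennreal (exp (real n / 2))"
proof -
  interpret M: prob_space M by (rule M)
  interpret P: prob_space "sphere_tuples p n" by (rule prob_space_sphere_tuples[OF n])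
  have pair: "pair_sigma_finite M (sphere_tuples p n)"
    by (simp add: pair_sigma_finite_def M.sigma_finite_measure_axioms P.sigma_finite_measure_axioms)
  have "(\<lambda>\<omega>. Z \<omega> xs) \<in> borel_measurable M" if "xs \<in> tensor_idx p n" for xs
    using distributed_measurable[OF std[OF that]] by simp
  then have "(\<lambda>z. multilin p n (Z (fst z)) (snd z)) \<in> borel_measurable (M \<Otimes>\<^sub>M sphere_tuples p n)"
    by (rule multilin_measurable_pair)
  then have integrand: "(\<lambda>z. ennreal (exp (sqrt (real n) * multilin p n (Z (fst z)) (snd z))))
               \<in> borel_measurable (M \<Otimes>\<^sub>M sphere_tuples p n)"
    by measurable
  have "(\<integral>\<^sup>+ \<omega>. partition_fun p n (Z \<omega>) \<partial>M)
      = (\<integral>\<^sup>+ x. (\<integral>\<^sup>+ \<omega>. ennreal (exp (sqrt (real n) * multilin p n (Z \<omega>) x)) \<partial>M) \<partial>sphere_tuples p n)"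
    unfolding partition_fun_def using pair_sigma_finite.Fubini[OF pair integrand] by simp
  also have "\<dots> = (\<integral>\<^sup>+ x. ennreal (exp (real n / 2)) \<partial>sphere_tuples p n)"
  proof (rule nn_integral_cong)
    fix x assume x: "x \<in> space (sphere_tuples p n)"
    let ?c = "\<lambda>xs. sqrt (real n) * (\<Prod>j<p. x j (xs ! j))"
    have "(\<integral>\<^sup>+ \<omega>. ennreal (exp (sqrt (real n) * multilin p n (Z \<omega>) x)) \<partial>M)
            = (\<integral>\<^sup>+ \<omega>. ennreal (exp (\<Sum>xs\<in>tensor_idx p n. ?c xs * Z \<omega> xs)) \<partial>M)"
      by (simp add: multilin_def sum_distrib_left mult.assoc)
    also have "\<dots> = ennreal (exp ((\<Sum>xs\<in>tensor_idx p n. (?c xs)\<^sup>2) / 2))"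
      by (rule M.nn_integral_exp_gaussian_sum[OF finite_tensor_idx ind std])
    also have "(\<Sum>xs\<in>tensor_idx p n. (?c xs)\<^sup>2) = real n * (\<Prod>j<p. sqnorm n (x j))"
      by (simp add: power_mult_distrib sum_distrib_left[symmetric] sum_tensor_idx_prod_square)
    also have "(\<Prod>j<p. sqnorm n (x j)) = 1"
      using space_sphere_tuples[OF x] by (intro prod.neutral) (auto simp: sphere_n_def)
    finally show "(\<integral>\<^sup>+ \<omega>. ennreal (exp (sqrt (real n) * multilin p n (Z \<omega>) x)) \<partial>M)
                    = ennreal (exp (real n / 2))"
      by simp
  qed
  also have "\<dots> = ennreal (exp (real n / 2))"
    by (simp add: P.emeasure_space_1)
  finally show ?thesis .
qed

lemma partition_fun_measurable:
  assumes n: "n \<ge> 1" and Z: "\<And>xs. xs \<in> tensor_idx p n \<Longrightarrow> (\<lambda>\<omega>. Z \<omega> xs) \<in> borel_measurable M"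
  shows "(\<lambda>\<omega>. partition_fun p n (Z \<omega>)) \<in> borel_measurable M"
proof -
  interpret P: prob_space "sphere_tuples p n" by (rule prob_space_sphere_tuples[OF n])
  have "(\<lambda>z. multilin p n (Z (fst z)) (snd z)) \<in> borel_measurable (M \<Otimes>\<^sub>M sphere_tuples p n)"
    using Z by (rule multilin_measurable_pair)
  then have "(\<lambda>z. ennreal (exp (sqrt (real n) * multilin p n (Z (fst z)) (snd z))))
               \<in> borel_measurable (M \<Otimes>\<^sub>M sphere_tuples p n)"
    by measurable
  then show ?thesis
    unfolding partition_fun_def by (rule P.borel_measurable_nn_integral[unfolded case_prod_unfold]) 
qed

lemma emeasure_partition_fun_gt_le:
  assumes M: "prob_space M" and n: "n \<ge> 1"
    and ind: "prob_space.indep_vars M (\<lambda>_. borel) (\<lambda>xs \<omega>. Z \<omega> xs) (tensor_idx p n)"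
    and std: "\<And>xs. xs \<in> tensor_idx p n \<Longrightarrow> distributed M lborel (\<lambda>\<omega>. Z \<omega> xs) std_normal_density"
  shows "emeasure M {\<omega> \<in> space M. ennreal (exp (3 * real n / 2)) < partition_fun p n (Z \<omega>)}
           \<le> ennreal (exp (- real n))"
proof -
  let ?c = "ennreal (exp (- (3 * real n / 2)))"
  have F_meas: "(\<lambda>\<omega>. partition_fun p n (Z \<omega>)) \<in> borel_measurable M"
    using n by (rule partition_fun_measurable) (use distributed_measurable[OF std] in simp)
  have one: "?c * ennreal (exp (3 * real n / 2)) = 1"
    by (simp add: ennreal_mult[symmetric] exp_add[symmetric])
  have "{\<omega> \<in> space M. ennreal (exp (3 * real n / 2)) < partition_fun p n (Z \<omega>)}
          \<subseteq> {\<omega> \<in> space M. 1 \<le> ?c * partition_fun p n (Z \<omega>)}"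
  proof
    fix \<omega> assume \<omega>: "\<omega> \<in> {\<omega> \<in> space M. ennreal (exp (3 * real n / 2)) < partition_fun p n (Z \<omega>)}"
    then have "?c * ennreal (exp (3 * real n / 2)) \<le> ?c * partition_fun p n (Z \<omega>)"
      by (intro mult_left_mono) auto
    with one \<omega> show "\<omega> \<in> {\<omega> \<in> space M. 1 \<le> ?c * partition_fun p n (Z \<omega>)}"
      by simp
  qed
  then have "emeasure M {\<omega> \<in> space M. ennreal (exp (3 * real n / 2)) < partition_fun p n (Z \<omega>)}
               \<le> emeasure M {\<omega> \<in> space M. 1 \<le> ?c * partition_fun p n (Z \<omega>)}"
    by (rule emeasure_mono) (use F_meas in measurable)
  also have "\<dots> \<le> ?c * (\<integral>\<^sup>+ \<omega>. partition_fun p n (Z \<omega>) * indicator (space M) \<omega> \<partial>M)"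
    by (rule nn_integral_Markov_inequality) (use F_meas in measurable)
  also have "(\<integral>\<^sup>+ \<omega>. partition_fun p n (Z \<omega>) * indicator (space M) \<omega> \<partial>M)
               = (\<integral>\<^sup>+ \<omega>. partition_fun p n (Z \<omega>) \<partial>M)"
    by (rule nn_integral_cong) simp
  also have "\<dots> = ennreal (exp (real n / 2))"
    by (rule nn_integral_partition_fun[OF M n ind std])
  also have "?c * ennreal (exp (real n / 2)) = ennreal (exp (- real n))"
    by (simp add: ennreal_mult[symmetric] exp_add[symmetric])
  finally show ?thesis .
qed

lemma AE_eventually_partition_fun_le:
  assumes M: "prob_space M"
    and ind: "\<forall>n\<ge>1. prob_space.indep_vars M (\<lambda>_. borel) (\<lambda>xs \<omega>. Z n \<omega> xs) (tensor_idx p n)"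
    and std: "\<forall>n\<ge>1. \<forall>xs\<in>tensor_idx p n. distributed M lborel (\<lambda>\<omega>. Z n \<omega> xs) std_normal_density"
  shows "AE \<omega> in M. eventually (\<lambda>n. partition_fun p n (Z n \<omega>) \<le> ennreal (exp (3 * real n / 2))) sequentially"
proof -
  interpret M: prob_space M by (rule M)
  define A where "A n = (if n \<ge> 1 then {\<omega> \<in> space M. ennreal (exp (3 * real n / 2)) < partition_fun p n (Z n \<omega>)} else {})" for n
  have F_meas: "(\<lambda>\<omega>. partition_fun p n (Z n \<omega>)) \<in> borel_measurable M" if n: "n \<ge> 1" for n
  proof (rule partition_fun_measurable[OF n])
    fix xs assume "xs \<in> tensor_idx p n"
    then show "(\<lambda>\<omega>. Z n \<omega> xs) \<in> borel_measurable M"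
      using std n distributed_measurable[of M lborel] by fastforce
  qed
  have A_sets: "A n \<in> sets M" for n
    using F_meas[of n] unfolding A_def by auto
  have A_le: "measure M (A n) \<le> exp (- real n)" for n
    using emeasure_partition_fun_gt_le[OF M, where n = n and Z = "Z n"] ind std
    by (cases "n \<ge> 1") (auto simp: A_def M.emeasure_eq_measure)
  have "(\<lambda>n. exp (- real n)) = (\<lambda>n. exp (- 1) ^ n)"
    by (simp add: exp_of_nat_mult[symmetric])
  then have "summable (\<lambda>n. exp (- real n))"
    by (simp add: summable_geometric)
  then have "summable (\<lambda>n. measure M (A n))"
    by (rule summable_comparison_test'[where N = 0]) (use A_le in simp)
  then have "AE \<omega> in M. eventually (\<lambda>n. \<omega> \<in> space M - A n) sequentially"
    by (intro borel_cantelli_AE1 A_sets) (auto simp: M.emeasure_eq_measure)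
  then show ?thesis
  proof (rule eventually_mono)
    fix \<omega> assume "eventually (\<lambda>n. \<omega> \<in> space M - A n) sequentially"
    then show "eventually (\<lambda>n. partition_fun p n (Z n \<omega>) \<le> ennreal (exp (3 * real n / 2))) sequentially"
      using eventually_ge_at_top[of "1::nat"] by eventually_elim (auto simp: A_def not_less)
  qed
qed

section \<open>The operator norm of the noise tensor\<close>

lemma partition_fun_ge:
  assumes A: "A \<in> sets (sphere_tuples p n)" and c: "\<And>x. x \<in> A \<Longrightarrow> c \<le> multilin p n T x"
  shows "ennreal (exp (sqrt (real n) * c)) * emeasure (sphere_tuples p n) A \<le> partition_fun p n T"
proof -
  have "ennreal (exp (sqrt (real n) * c)) * emeasure (sphere_tuples p n) A
          = (\<integral>\<^sup>+ x. ennreal (exp (sqrt (real n) * c)) * indicator A x \<partial>sphere_tuples p n)"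
    using A by (simp add: nn_integral_cmult_indicator)
  also have "\<dots> \<le> partition_fun p n T"
    unfolding partition_fun_def
    by (rule nn_integral_mono) (auto simp: indicator_def intro!: ennreal_leI mult_left_mono c)
  finally show ?thesis .
qed

lemma emeasure_PiE_caps_ge:
  assumes n: "n \<ge> 1" and \<theta>: "\<And>j. j < p \<Longrightarrow> sqnorm n (\<theta> j) = 1" and \<delta>: "0 < \<delta>" "\<delta> \<le> 1"
  shows "ennreal ((\<delta> / 20) ^ (n * p)) \<le> emeasure (sphere_tuples p n) (PiE {..<p} (\<lambda>j. cap n (\<theta> j) \<delta>))"
proof -
  interpret U: prob_space "unif_sphere n" by (rule prob_space_unif_sphere[OF n])
  have "emeasure (sphere_tuples p n) (PiE {..<p} (\<lambda>j. cap n (\<theta> j) \<delta>))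
          = (\<Prod>j<p. emeasure (unif_sphere n) (cap n (\<theta> j) \<delta>))"
    unfolding sphere_tuples_def
    by (rule product_sigma_finite.emeasure_PiM)
       (auto simp: product_sigma_finite_def prob_space_imp_sigma_finite prob_space_unif_sphere[OF n])
  also have "\<dots> = ennreal (\<Prod>j<p. measure (unif_sphere n) (cap n (\<theta> j) \<delta>))"
    by (simp add: U.emeasure_eq_measure prod_ennreal)
  moreover have "(\<Prod>j<p. (\<delta> / 20) ^ n) \<le> (\<Prod>j<p. measure (unif_sphere n) (cap n (\<theta> j) \<delta>))"
    using emeasure_cap_ge[OF n \<theta> \<delta>] \<delta> by (intro prod_mono) (auto simp: U.emeasure_eq_measure)
  ultimately show ?thesis
    by (simp add: power_mult ennreal_leI)
qed

lemma multilin_ge_on_caps: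
  assumes \<theta>: "\<And>j. j < p \<Longrightarrow> sqnorm n (\<theta> j) = 1" and \<delta>: "0 \<le> \<delta>"
    and x: "x \<in> PiE {..<p} (\<lambda>j. cap n (\<theta> j) \<delta>)"
  shows "multilin p n T \<theta> - tensor_opnorm p n T * (real p * \<delta>) \<le> multilin p n T x"
proof -
  have near: "norm_n n (\<lambda>i. \<theta> k i - x k i) \<le> \<delta>" if "k < p" for k
  proof -
    have "sqnorm n (\<lambda>i. \<theta> k i - x k i) = sqnorm n (\<lambda>i. x k i - \<theta> k i)"
      by (simp add: sqnorm_def power2_commute)
    also have "\<dots> \<le> \<delta>\<^sup>2"
      using x that by (auto simp: cap_def PiE_iff)
    finally have "sqnorm n (\<lambda>i. \<theta> k i - x k i) \<le> \<delta>\<^sup>2" .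
    from real_sqrt_le_mono[OF this] show ?thesis
      using \<delta> by (simp add: norm_n_eq_sqrt)
  qed
  have "\<theta> \<in> unit_balls p n" "x \<in> unit_balls p n"
    using \<theta> x by (auto simp: unit_balls_def cap_def sphere_n_def PiE_iff)
  then have "multilin p n T \<theta>
               \<le> multilin p n T x + tensor_opnorm p n T * (\<Sum>k<p. norm_n n (\<lambda>i. \<theta> k i - x k i))"
    by (rule multilin_lipschitz)
  also have "(\<Sum>k<p. norm_n n (\<lambda>i. \<theta> k i - x k i)) \<le> real p * \<delta>"
    using sum_mono[of "{..<p}" "\<lambda>k. norm_n n (\<lambda>i. \<theta> k i - x k i)" "\<lambda>_. \<delta>"] near by simp
  finally show ?thesis
    using tensor_opnorm_nonneg[of p n T] by (simp add: mult_left_mono)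
qed

lemma multilin_le_of_partition_fun_le:
  assumes n: "n \<ge> 1" and p: "p \<ge> 1"
    and F: "partition_fun p n T \<le> ennreal (exp (3 * real n / 2))"
    and \<theta>: "\<And>j. j < p \<Longrightarrow> sqnorm n (\<theta> j) = 1"
  shows "multilin p n T \<theta> \<le> sqrt (real n) * (3/2 + real p * ln (40 * real p)) + tensor_opnorm p n T / 2"
proof -
  define \<delta> where "\<delta> = 1 / (2 * real p)"
  have \<delta>: "0 < \<delta>" "\<delta> \<le> 1" using p by (auto simp: \<delta>_def field_simps)
  define C where "C = PiE {..<p} (\<lambda>j. cap n (\<theta> j) \<delta>)"
  define c where "c = multilin p n T \<theta> - tensor_opnorm p n T / 2"
  have half: "real p * \<delta> = 1/2"
    using p by (simp add: \<delta>_def)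
  have "c \<le> multilin p n T x" if "x \<in> C" for x
    using multilin_ge_on_caps[where T = T, OF \<theta> _ that[unfolded C_def]] \<delta>
    unfolding half c_def by simp
  then have lower: "ennreal (exp (sqrt (real n) * c)) * emeasure (sphere_tuples p n) C \<le> partition_fun p n T"
    by (intro partition_fun_ge) (auto simp: C_def sphere_tuples_def intro!: sets_PiM_I_finite)
  have "ennreal (exp (sqrt (real n) * c) * (\<delta> / 20) ^ (n * p))
          = ennreal (exp (sqrt (real n) * c)) * ennreal ((\<delta> / 20) ^ (n * p))"
    using \<delta> by (simp add: ennreal_mult)
  also have "\<dots> \<le> ennreal (exp (sqrt (real n) * c)) * emeasure (sphere_tuples p n) C"
    unfolding C_def using emeasure_PiE_caps_ge[of n p \<theta> \<delta>] n \<theta> \<delta> by (intro mult_left_mono) auto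
  also note lower
  also note F
  finally have "exp (sqrt (real n) * c) * (\<delta> / 20) ^ (n * p) \<le> exp (3 * real n / 2)"
    by simp
  moreover have "\<delta> / 20 = exp (- ln (40 * real p))"
    using p by (simp add: \<delta>_def exp_minus inverse_eq_divide)
  then have "(\<delta> / 20) ^ (n * p) = exp (- (real n * real p * ln (40 * real p)))"
    by (simp add: exp_of_nat_mult[symmetric] mult.assoc)
  ultimately have "sqrt (real n) * c \<le> 3 * real n / 2 + real n * real p * ln (40 * real p)"
    by (simp add: exp_add[symmetric])
  also have "\<dots> = sqrt (real n) * (sqrt (real n) * (3/2 + real p * ln (40 * real p)))"
    by (simp add: algebra_simps flip: mult.assoc)
  finally show ?thesis
    using n by (simp add: c_def)
qed

definition noise_const :: "nat \<Rightarrow> real" where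
  "noise_const p = 3 + 2 * real p * ln (40 * real p)"

lemma noise_const_nonneg: "p \<ge> 1 \<Longrightarrow> 0 \<le> noise_const p"
  by (simp add: noise_const_def)

lemma tensor_opnorm_le_of_partition_fun_le:
  assumes n: "n \<ge> 1" and p: "p \<ge> 1"
    and F: "partition_fun p n T \<le> ennreal (exp (3 * real n / 2))"
  shows "tensor_opnorm p n T \<le> sqrt (real n) * noise_const p"
proof -
  have "tensor_opnorm p n T
          \<le> sqrt (real n) * (3/2 + real p * ln (40 * real p)) + tensor_opnorm p n T / 2"
    by (rule tensor_opnorm_le_of_sphere[OF n p]) (rule multilin_le_of_partition_fun_le[OF n p F])
  then show ?thesis
    by (simp add: noise_const_def algebra_simps)
qed

lemma abs_tensor_inner_le_tensor_opnorm:
  "sqnorm n \<theta> \<le> 1 \<Longrightarrow> \<bar>tensor_inner p n \<theta> T\<bar> \<le> tensor_opnorm p n T"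
  unfolding tensor_inner_eq_multilin by (rule abs_multilin_le_tensor_opnorm) (simp add: unit_balls_def)

section \<open>Posterior contraction\<close>

lemma (in prob_space) integral_indicator_mult_le:
  assumes S: "S \<in> events" and f: "integrable M f" and le: "\<And>x. x \<in> S \<Longrightarrow> f x \<le> c"
  shows "(\<integral>x. indicator S x * f x \<partial>M) \<le> c * prob S"
proof -
  have "(\<integral>x. indicator S x * f x \<partial>M) \<le> (\<integral>x. c * indicator S x \<partial>M)"
  proof (rule integral_mono)
    show "integrable M (\<lambda>x. indicator S x * f x)"
      using integrable_real_mult_indicator[OF S f] by (simp add: mult.commute)
    show "integrable M (\<lambda>x. c * indicator S x)"
      using S by (intro integrable_mult_right integrable_real_indicator) (auto simp: emeasure_eq_measure)
    fix x
    show "indicator S x * f x \<le> c * indicator S x"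
      by (auto simp: indicator_def le)
  qed
  also have "\<dots> = c * prob S"
    using S by simp
  finally show ?thesis .
qed

lemma (in prob_space) prob_mult_le_integral:
  assumes S: "S \<in> events" and f: "integrable M f"
    and ge: "\<And>x. x \<in> S \<Longrightarrow> c \<le> f x" and nonneg: "\<And>x. x \<in> space M \<Longrightarrow> 0 \<le> f x"
  shows "c * prob S \<le> (\<integral>x. f x \<partial>M)"
proof -
  have "c * prob S = (\<integral>x. c * indicator S x \<partial>M)"
    using S by simp
  also have "\<dots> \<le> (\<integral>x. f x \<partial>M)"
  proof (rule integral_mono[OF _ f])
    show "integrable M (\<lambda>x. c * indicator S x)"
      using S by (intro integrable_mult_right integrable_real_indicator) (auto simp: emeasure_eq_measure)
    fix x assume "x \<in> space M"
    then show "c * indicator S x \<le> f x"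
      by (auto simp: indicator_def ge nonneg)
  qed
  finally show ?thesis .
qed

lemma (in prob_space) exp_weighted_prob_bounds:
  fixes g :: "'a \<Rightarrow> real"
  assumes g: "g \<in> borel_measurable M" and g_le: "\<And>x. x \<in> space M \<Longrightarrow> g x \<le> B"
    and A: "A \<in> events" and C: "C \<in> events" "prob C > 0"
    and outside: "\<And>x. x \<in> space M - A \<Longrightarrow> g x \<le> a"
    and inside: "\<And>x. x \<in> C \<Longrightarrow> b \<le> g x"
  shows "1 - exp (a - b) / prob C \<le> (\<integral>x. indicator A x * exp (g x) \<partial>M) / (\<integral>x. exp (g x) \<partial>M)"
    and "(\<integral>x. indicator A x * exp (g x) \<partial>M) / (\<integral>x. exp (g x) \<partial>M) \<le> 1"
proof -
  have int: "integrable M (\<lambda>x. exp (g x))"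
    by (rule integrable_const_bound[where B = "exp B"]) (use g g_le in auto)
  have Ac: "space M - A \<in> events"
    using A by auto
  define W where "W = (\<integral>x. exp (g x) \<partial>M)"
  define N where "N = (\<integral>x. indicator A x * exp (g x) \<partial>M)"
  define R where "R = (\<integral>x. indicator (space M - A) x * exp (g x) \<partial>M)"
  have "W = (\<integral>x. indicator A x * exp (g x) + indicator (space M - A) x * exp (g x) \<partial>M)"
    unfolding W_def by (rule Bochner_Integration.integral_cong) (auto simp: indicator_def)
  also have "\<dots> = N + R"
    unfolding N_def R_def using integrable_real_mult_indicator[OF A int] integrable_real_mult_indicator[OF Ac int]
    by (intro Bochner_Integration.integral_add) (simp_all add: mult.commute)
  finally have W_eq: "W = N + R" .
  have R_nonneg: "0 \<le> R"
    unfolding R_def by (rule Bochner_Integration.integral_nonneg) simp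
  have "R \<le> exp a * prob (space M - A)"
    unfolding R_def by (rule integral_indicator_mult_le[OF Ac int]) (simp add: outside)
  also have "\<dots> \<le> exp a"
    by (simp add: mult_left_le)
  finally have R_le: "R \<le> exp a" .
  have W_ge: "exp b * prob C \<le> W"
    unfolding W_def by (rule prob_mult_le_integral[OF C(1) int]) (simp_all add: inside)
  have "0 < exp b * prob C"
    using C by simp
  with W_ge have W_pos: "0 < W"
    by linarith
  have "exp (a - b) / prob C = exp a / (exp b * prob C)"
    by (simp add: exp_diff)
  also have "\<dots> \<ge> R / W"
    using R_le W_ge R_nonneg C by (intro frac_le) auto
  finally have ratio: "1 - exp (a - b) / prob C \<le> 1 - R / W" by simp
  have "N / W = (W - R) / W"
    using W_eq by simp
  also have "\<dots> = 1 - R / W"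
    using W_pos by (simp add: diff_divide_distrib)
  finally have N_eq: "N / W = 1 - R / W" .
  from ratio N_eq have "1 - exp (a - b) / prob C \<le> N / W"
    by (simp only:)
  then show "1 - exp (a - b) / prob C \<le> (\<integral>x. indicator A x * exp (g x) \<partial>M) / (\<integral>x. exp (g x) \<partial>M)"
    by (simp only: N_def W_def)
  have "0 \<le> R / W"
    using R_nonneg W_pos by simp
  with N_eq have "N / W \<le> 1"
    by linarith
  then show "(\<integral>x. indicator A x * exp (g x) \<partial>M) / (\<integral>x. exp (g x) \<partial>M) \<le> 1"
    by (simp only: N_def W_def)
qed

lemma inner_n_measurable_unif_sphere: "(\<lambda>\<theta>. inner_n n \<theta> \<theta>0) \<in> borel_measurable (unif_sphere n)"
proof -
  note coord_measurable_unif_sphere [measurable]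
  show ?thesis unfolding inner_n_def by measurable
qed

lemma T_set_sets: "T_set p n \<theta>0 s \<in> sets (unif_sphere n)"
proof -
  note inner_n_measurable_unif_sphere [measurable]
  have "{\<theta> \<in> space (unif_sphere n). s < \<bar>inner_n n \<theta> \<theta>0\<bar>} \<in> sets (unif_sphere n)"
    by measurable
  moreover have "{\<theta> \<in> space (unif_sphere n). s < inner_n n \<theta> \<theta>0} \<in> sets (unif_sphere n)"
    by measurable
  ultimately show ?thesis by (simp add: T_set_def space_unif_sphere)
qed

lemma power_inner_n_le_of_notin_T_set:
  assumes "\<theta> \<in> sphere_n n" "\<theta> \<notin> T_set p n \<theta>0 s" "0 \<le> s"
  shows "(inner_n n \<theta> \<theta>0) ^ p \<le> s ^ p"
proof (cases "even p")
  case True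
  then have "\<bar>inner_n n \<theta> \<theta>0\<bar> \<le> s" using assms by (auto simp: T_set_def)
  then have "\<bar>inner_n n \<theta> \<theta>0\<bar> ^ p \<le> s ^ p" by (intro power_mono) auto
  then show ?thesis using True by (simp add: power_even_abs)
next
  case False
  then have le: "inner_n n \<theta> \<theta>0 \<le> s" using assms by (auto simp: T_set_def)
  show ?thesis
  proof (cases "inner_n n \<theta> \<theta>0 \<ge> 0")
    case True
    then show ?thesis using le by (intro power_mono) auto
  next
    case False
    then have "(inner_n n \<theta> \<theta>0) ^ p < 0" using \<open>odd p\<close> by (simp add: power_less_zero_eq)
    then show ?thesis using zero_le_power[OF assms(3), of p] by linarith
  qed
qed

definition contraction_rate :: "nat \<Rightarrow> real \<Rightarrow> real \<Rightarrow> real \<Rightarrow> real" where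
  "contraction_rate p lam \<delta> s =
     lam\<^sup>2 / 2 * ((1 - \<delta>\<^sup>2 / 2) ^ p - s ^ p) - lam * noise_const p - ln (20 / \<delta>)"

lemma tensor_inner_le_sum_abs:
  "sqnorm n \<theta> \<le> 1 \<Longrightarrow> tensor_inner p n \<theta> T \<le> (\<Sum>xs\<in>tensor_idx p n. \<bar>T xs\<bar>)"
  unfolding tensor_inner_eq_multilin
  by (rule abs_multilin_le_sum_abs[THEN abs_le_D1]) (simp add: unit_balls_def)

lemma tensor_inner_measurable_unif_sphere:
  "(\<lambda>\<theta>. tensor_inner p n \<theta> T) \<in> borel_measurable (unif_sphere n)"
proof -
  note coord_measurable_unif_sphere [measurable]
  show ?thesis
    unfolding tensor_inner_def tpow_def by measurable
qed

lemma posterior_exponent_obs: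
  "1/2 * sqrt (real n) * lam * tensor_inner p n \<theta> (obs p n lam \<theta>0 T)
     = real n * (lam\<^sup>2 / 2 * (inner_n n \<theta> \<theta>0) ^ p) + 1/2 * sqrt (real n) * lam * tensor_inner p n \<theta> T"
proof -
  have "sqrt (real n) * sqrt (real n) = real n"
    by simp
  then show ?thesis
    unfolding tensor_inner_obs by (simp add: algebra_simps power2_eq_square)
qed

lemma abs_noise_exponent_le:
  assumes n: "n \<ge> 1" and p: "p \<ge> 1" and lam: "0 \<le> lam"
    and F: "partition_fun p n T \<le> ennreal (exp (3 * real n / 2))" and \<theta>: "\<theta> \<in> sphere_n n"
  shows "\<bar>1/2 * sqrt (real n) * lam * tensor_inner p n \<theta> T\<bar> \<le> real n * (lam * noise_const p / 2)"
proof -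
  have "\<bar>tensor_inner p n \<theta> T\<bar> \<le> sqrt (real n) * noise_const p"
    using abs_tensor_inner_le_tensor_opnorm[of n \<theta> p T] tensor_opnorm_le_of_partition_fun_le[OF n p F] \<theta>
    by (simp add: sphere_n_def)
  then have "1/2 * sqrt (real n) * lam * \<bar>tensor_inner p n \<theta> T\<bar>
               \<le> 1/2 * sqrt (real n) * lam * (sqrt (real n) * noise_const p)"
    using lam by (intro mult_left_mono) auto
  then show ?thesis
    using lam by (simp add: abs_mult algebra_simps)
qed

lemma exp_exponent_gap_div_le:
  assumes \<delta>: "0 < \<delta>" and m: "(\<delta> / 20) ^ n \<le> m"
  shows "exp ((real n * (lam\<^sup>2 / 2 * s ^ p) + real n * (lam * noise_const p / 2))
              - (real n * (lam\<^sup>2 / 2 * (1 - \<delta>\<^sup>2 / 2) ^ p) - real n * (lam * noise_const p / 2))) / m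
           \<le> exp (- real n * contraction_rate p lam \<delta> s)"
    (is "exp ?e / m \<le> _")
proof -
  have pos: "0 < (\<delta> / 20) ^ n"
    using \<delta> by simp
  with m have "exp ?e / m \<le> exp ?e / (\<delta> / 20) ^ n"
    by (intro divide_left_mono) auto
  also have "(\<delta> / 20) ^ n = exp (- (real n * ln (20 / \<delta>)))"
  proof -
    have eq: "\<delta> / 20 = exp (- ln (20 / \<delta>))"
      using \<delta> by (simp add: exp_minus inverse_eq_divide)
    show ?thesis
      unfolding eq by (simp add: exp_of_nat_mult[symmetric])
  qed
  also have "exp ?e / \<dots> = exp (- real n * contraction_rate p lam \<delta> s)"
    by (simp add: exp_add[symmetric] contraction_rate_def algebra_simps flip: exp_diff)
  finally show ?thesis .
qed

lemma posterior_T_set_bounds: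
  assumes n: "n \<ge> 1" and p: "p \<ge> 1" and lam: "0 \<le> lam" and \<theta>0: "sqnorm n \<theta>0 = 1"
    and F: "partition_fun p n T \<le> ennreal (exp (3 * real n / 2))"
    and s: "0 \<le> s" and \<delta>: "0 < \<delta>" "\<delta> \<le> 1"
  shows "1 - exp (- real n * contraction_rate p lam \<delta> s)
           \<le> posterior p n lam (obs p n lam \<theta>0 T) (T_set p n \<theta>0 s)"
    and "posterior p n lam (obs p n lam \<theta>0 T) (T_set p n \<theta>0 s) \<le> 1"
proof -
  let ?U = "unif_sphere n"
  let ?Y = "obs p n lam \<theta>0 T"
  let ?C = "cap n \<theta>0 \<delta>"
  let ?noise = "\<lambda>\<theta>. 1/2 * sqrt (real n) * lam * tensor_inner p n \<theta> T"
  interpret U: prob_space ?U by (rule prob_space_unif_sphere[OF n])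
  define K where "K = noise_const p"
  define r where "r = 1 - \<delta>\<^sup>2 / 2"
  define g where "g \<theta> = 1/2 * sqrt (real n) * lam * tensor_inner p n \<theta> ?Y" for \<theta>
  define a where "a = real n * (lam\<^sup>2 / 2 * s ^ p) + real n * (lam * K / 2)"
  define b where "b = real n * (lam\<^sup>2 / 2 * r ^ p) - real n * (lam * K / 2)"
  have g_eq: "g \<theta> = real n * (lam\<^sup>2 / 2 * (inner_n n \<theta> \<theta>0) ^ p) + ?noise \<theta>" for \<theta>
    unfolding g_def by (rule posterior_exponent_obs)
  note noise = abs_noise_exponent_le[OF n p lam F, folded K_def]
  have g_meas: "g \<in> borel_measurable ?U"
    using tensor_inner_measurable_unif_sphere unfolding g_def by measurable
  have g_le: "g \<theta> \<le> 1/2 * sqrt (real n) * lam * (\<Sum>xs\<in>tensor_idx p n. \<bar>?Y xs\<bar>)"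
    if "\<theta> \<in> space ?U" for \<theta>
    using tensor_inner_le_sum_abs[of n \<theta> p ?Y] that lam
    unfolding g_def by (intro mult_left_mono) (auto simp: space_unif_sphere sphere_n_def)
  have outside: "g \<theta> \<le> a" if "\<theta> \<in> space ?U - T_set p n \<theta>0 s" for \<theta>
  proof -
    have \<theta>: "\<theta> \<in> sphere_n n" "\<theta> \<notin> T_set p n \<theta>0 s"
      using that by (auto simp: space_unif_sphere)
    have "real n * (lam\<^sup>2 / 2 * (inner_n n \<theta> \<theta>0) ^ p) \<le> real n * (lam\<^sup>2 / 2 * s ^ p)"
      using power_inner_n_le_of_notin_T_set[OF \<theta> s] by (intro mult_left_mono) auto
    then show ?thesis
      using abs_le_D1[OF noise[OF \<theta>(1)]] unfolding g_eq a_def by linarith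
  qed
  have inside: "b \<le> g \<theta>" if "\<theta> \<in> ?C" for \<theta>
  proof -
    have \<theta>: "\<theta> \<in> sphere_n n"
      using that by (simp add: cap_def)
    have "\<delta>\<^sup>2 \<le> 1"
      using \<delta> by (simp add: power_le_one)
    then have "0 \<le> r" "r \<le> inner_n n \<theta> \<theta>0"
      using inner_n_ge_of_cap[OF that \<theta>0] by (simp_all add: r_def)
    then have "real n * (lam\<^sup>2 / 2 * r ^ p) \<le> real n * (lam\<^sup>2 / 2 * (inner_n n \<theta> \<theta>0) ^ p)"
      by (intro mult_left_mono power_mono) auto
    then show ?thesis
      using abs_le_D2[OF noise[OF \<theta>]] unfolding g_eq b_def by linarith
  qed
  have C_ge: "(\<delta> / 20) ^ n \<le> measure ?U ?C"
    using emeasure_cap_ge[OF n \<theta>0 \<delta>] \<delta> by (simp add: U.emeasure_eq_measure)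
  moreover have "0 < (\<delta> / 20) ^ n"
    using \<delta> by simp
  ultimately have C_pos: "0 < measure ?U ?C"
    by linarith
  have post: "posterior p n lam ?Y A = (\<integral>\<theta>. indicator A \<theta> * exp (g \<theta>) \<partial>?U) / (\<integral>\<theta>. exp (g \<theta>) \<partial>?U)" for A
    by (simp add: posterior_def g_def)
  have rate: "exp (a - b) / measure ?U ?C \<le> exp (- real n * contraction_rate p lam \<delta> s)"
    unfolding a_def b_def r_def K_def by (rule exp_exponent_gap_div_le[OF \<delta>(1) C_ge])
  note bounds = U.exp_weighted_prob_bounds[of g _ "T_set p n \<theta>0 s" ?C a b,
      OF g_meas g_le T_set_sets cap_sets C_pos outside inside]
  show "1 - exp (- real n * contraction_rate p lam \<delta> s) \<le> posterior p n lam ?Y (T_set p n \<theta>0 s)"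
    using bounds(1) rate unfolding post by linarith
  show "posterior p n lam ?Y (T_set p n \<theta>0 s) \<le> 1"
    using bounds(2) unfolding post .
qed

lemma AE_posterior_T_set_tendsto_1:
  assumes p: "p \<ge> 1" and lam: "0 \<le> lam" and s: "0 \<le> s" and \<delta>: "0 < \<delta>" "\<delta> \<le> 1"
    and rate: "0 < contraction_rate p lam \<delta> s"
    and M: "prob_space M" and \<theta>0: "\<forall>n\<ge>1. sqnorm n (\<theta>0 n) = 1"
    and ind: "\<forall>n\<ge>1. prob_space.indep_vars M (\<lambda>_. borel) (\<lambda>xs \<omega>. Z n \<omega> xs) (tensor_idx p n)"
    and std: "\<forall>n\<ge>1. \<forall>xs\<in>tensor_idx p n. distributed M lborel (\<lambda>\<omega>. Z n \<omega> xs) std_normal_density"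
  shows "AE \<omega> in M. (\<lambda>n. posterior p n lam (obs p n lam (\<theta>0 n) (Z n \<omega>)) (T_set p n (\<theta>0 n) s))
                      \<longlonglongrightarrow> 1"
  using AE_eventually_partition_fun_le[OF M ind std]
proof (rule eventually_mono)
  fix \<omega>
  assume F: "\<forall>\<^sub>F n in sequentially. partition_fun p n (Z n \<omega>) \<le> ennreal (exp (3 * real n / 2))"
  let ?post = "\<lambda>n. posterior p n lam (obs p n lam (\<theta>0 n) (Z n \<omega>)) (T_set p n (\<theta>0 n) s)"
  let ?\<eta> = "contraction_rate p lam \<delta> s"
  have bounds: "\<forall>\<^sub>F n in sequentially. 1 - exp (- real n * ?\<eta>) \<le> ?post n \<and> ?post n \<le> 1"
    using F eventually_ge_at_top[of "1::nat"]
  proof eventually_elim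
    case (elim n)
    then show ?case
      using posterior_T_set_bounds[OF _ p lam _ _ s \<delta>] \<theta>0 by auto
  qed
  have "(\<lambda>n. exp (- ?\<eta>) ^ n) \<longlonglongrightarrow> 0"
    using rate by (intro LIMSEQ_power_zero) simp
  then have "(\<lambda>n. exp (- real n * ?\<eta>)) \<longlonglongrightarrow> 0"
    by (simp add: exp_of_nat_mult[symmetric] mult.commute)
  then have lim: "(\<lambda>n. 1 - exp (- real n * ?\<eta>)) \<longlonglongrightarrow> 1"
    using tendsto_diff[OF tendsto_const[of 1]] by fastforce
  show "?post \<longlonglongrightarrow> 1"
  proof (rule tendsto_sandwich[OF _ _ lim tendsto_const])
    show "\<forall>\<^sub>F n in sequentially. 1 - exp (- real n * ?\<eta>) \<le> ?post n"
      using bounds by (rule eventually_mono) simp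
    show "\<forall>\<^sub>F n in sequentially. ?post n \<le> 1"
      using bounds by (rule eventually_mono) simp
  qed
qed

lemma power_gap_ge:
  assumes p: "p \<ge> 1" and L: "L \<ge> 1"
  shows "1 / (2 * sqrt (L + 1))
           \<le> (1 - (1 / sqrt (real p * (L + 1)))\<^sup>2 / 2) ^ p - (1 - 1 / sqrt (L + 1)) ^ p"
proof -
  define q where "q = sqrt (L + 1)"
  define e where "e = (1 / sqrt (real p * (L + 1)))\<^sup>2 / 2"
  have q1: "1 \<le> q"
    using L by (simp add: q_def)
  have "q * q = L + 1"
    using L by (simp add: q_def)
  with q1 mult_left_mono[of 1 q q] have qL: "q \<le> L + 1"
    by simp
  have pL: "1 \<le> real p * (L + 1)"
    using p L mult_mono[of 1 "real p" 1 "L + 1"] by simp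
  have e_eq: "e = 1 / (2 * (real p * (L + 1)))"
    using pL by (simp add: e_def power_divide)
  have "real p * e = 1 / (2 * (L + 1))"
    using p unfolding e_eq by simp
  moreover have "e \<le> 1"
    using pL unfolding e_eq by (simp add: field_simps)
  then have "1 - real p * e \<le> (1 - e) ^ p"
    using Bernoulli_inequality[of "- e" p] by simp
  moreover have "(1 - 1 / q) ^ p \<le> 1 - 1 / q"
    using q1 p by (intro power_decreasing[of 1 p, simplified]) auto
  moreover have "1 / (2 * (L + 1)) \<le> 1 / (2 * q)"
    using q1 qL by (intro frac_le) auto
  moreover have "1 / q = 2 * (1 / (2 * q))"
    by simp
  ultimately show ?thesis
    unfolding q_def[symmetric] e_def[symmetric] by linarith
qed

lemma ln_20_sqrt_le:
  assumes p: "p \<ge> 1" and L: "L \<ge> 1"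
  shows "ln (20 / (1 / sqrt (real p * (L + 1)))) \<le> (20 + real p) * L"
proof -
  have "ln (20 / (1 / sqrt (real p * (L + 1)))) = ln 20 + ln (real p * (L + 1)) / 2"
    using p L by (simp add: ln_mult ln_sqrt)
  moreover have "ln (20::real) \<le> 20 * L"
    using ln_le_minus_one[of 20] L by simp
  moreover have "ln (real p * (L + 1)) \<le> real p * (L + 1) - 1"
    using p L by (intro ln_le_minus_one) simp
  moreover have "real p \<le> real p * L"
    using p L by simp
  ultimately show ?thesis
    by (simp add: algebra_simps)
qed

definition signal_threshold :: "nat \<Rightarrow> real" where
  "signal_threshold p = 64 * (noise_const p + 20 + real p)\<^sup>2 + 1"

lemma contraction_rate_pos:
  assumes p: "p \<ge> 1" and lam: "signal_threshold p \<le> lam"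
  shows "0 < contraction_rate p lam (1 / sqrt (real p * (lam + 1))) (1 - 1 / sqrt (lam + 1))"
proof -
  define A where "A = noise_const p + 20 + real p"
  have A: "0 < A"
    using noise_const_nonneg[OF p] by (simp add: A_def)
  have "0 \<le> 64 * A\<^sup>2"
    by simp
  then have L: "1 \<le> lam"
    using lam unfolding signal_threshold_def A_def by linarith
  have "(8 * A)\<^sup>2 = 64 * A\<^sup>2"
    by (simp add: power_mult_distrib)
  then have r: "8 * A < sqrt lam"
    using lam unfolding signal_threshold_def A_def by (intro real_less_rsqrt) linarith
  have q: "sqrt (lam + 1) \<le> 2 * sqrt lam"
    using L real_sqrt_le_mono[of "lam + 1" "4 * lam"] by (simp add: real_sqrt_mult)
  have "lam * A < lam * (sqrt lam / 8)"
    using r L by simp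
  also have "lam * (sqrt lam / 8) = lam\<^sup>2 / 2 * (1 / (4 * sqrt lam))"
    using L by (simp add: field_simps power2_eq_square)
  also have "\<dots> \<le> lam\<^sup>2 / 2 * (1 / (2 * sqrt (lam + 1)))"
    using q L by (intro mult_left_mono frac_le) auto
  also have "\<dots> \<le> lam\<^sup>2 / 2 * ((1 - (1 / sqrt (real p * (lam + 1)))\<^sup>2 / 2) ^ p - (1 - 1 / sqrt (lam + 1)) ^ p)"
    using power_gap_ge[OF p L] by (intro mult_left_mono) auto
  finally show ?thesis
    using ln_20_sqrt_le[OF p L] by (simp add: contraction_rate_def A_def algebra_simps)
qed

lemma AE_posterior_tendsto_1_above_threshold:
  assumes p: "p \<ge> 1" and lam: "signal_threshold p \<le> lam"
    and M: "prob_space M" and \<theta>0: "\<forall>n\<ge>1. sqnorm n (\<theta>0 n) = 1"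
    and ind: "\<forall>n\<ge>1. prob_space.indep_vars M (\<lambda>_. borel) (\<lambda>xs \<omega>. Z n \<omega> xs) (tensor_idx p n)"
    and std: "\<forall>n\<ge>1. \<forall>xs\<in>tensor_idx p n. distributed M lborel (\<lambda>\<omega>. Z n \<omega> xs) std_normal_density"
  shows "AE \<omega> in M. (\<lambda>n. posterior p n lam (obs p n lam (\<theta>0 n) (Z n \<omega>))
                         (T_set p n (\<theta>0 n) (1 - 1 / sqrt (lam + 1)))) \<longlonglongrightarrow> 1"
proof (rule AE_posterior_T_set_tendsto_1[OF p _ _ _ _ contraction_rate_pos[OF p lam] M \<theta>0 ind std])
  have "0 \<le> 64 * (noise_const p + 20 + real p)\<^sup>2"
    by simp
  then have L: "1 \<le> lam"
    using lam unfolding signal_threshold_def by linarith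
  then show "0 \<le> lam" "0 \<le> 1 - 1 / sqrt (lam + 1)"
    by simp_all
  have "1 \<le> real p * (lam + 1)"
    using p L mult_mono[of 1 "real p" 1 "lam + 1"] by simp
  then show "0 < 1 / sqrt (real p * (lam + 1))" "1 / sqrt (real p * (lam + 1)) \<le> 1"
    by auto
qed

theorem corollary2p4:
  fixes p :: nat
  assumes "p \<ge> 3"
  shows "\<exists>lam0 > 0. \<exists>s :: real \<Rightarrow> real.
           (\<forall>lam\<ge>0. 0 \<le> s lam \<and> s lam < 1) \<and> (s \<longlongrightarrow> 1) at_top \<and>
           (\<forall>lam \<ge> lam0. \<forall>(\<theta>0 :: nat \<Rightarrow> nat \<Rightarrow> real) (M :: 'a measure)
                (Z :: nat \<Rightarrow> 'a \<Rightarrow> nat list \<Rightarrow> real).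
              prob_space M \<longrightarrow>
              (\<forall>n\<ge>1. sqnorm n (\<theta>0 n) = 1) \<longrightarrow>
              (\<forall>n\<ge>1. prob_space.indep_vars M (\<lambda>_. borel) (\<lambda>xs \<omega>. Z n \<omega> xs) (tensor_idx p n)) \<longrightarrow>
              (\<forall>n\<ge>1. \<forall>xs\<in>tensor_idx p n. distributed M lborel (\<lambda>\<omega>. Z n \<omega> xs) std_normal_density) \<longrightarrow>
              (AE \<omega> in M. (\<lambda>n. posterior p n lam (obs p n lam (\<theta>0 n) (Z n \<omega>))
                                   (T_set p n (\<theta>0 n) (s lam))) \<longlonglongrightarrow> 1))"
proof -
  have p: "p \<ge> 1"
    using assms by simp
  define s where "s lam = 1 - 1 / sqrt (lam + 1)" for lam :: real
  show ?thesis
  proof (intro exI[of _ "signal_threshold p"] exI[of _ s] conjI allI impI)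
    show "0 < signal_threshold p"
      by (simp add: signal_threshold_def add_nonneg_pos)
    show "0 \<le> s lam" "s lam < 1" if "0 \<le> lam" for lam
      using that by (simp_all add: s_def)
    show "(s \<longlongrightarrow> 1) at_top"
      unfolding s_def by real_asymp
  next
    fix lam :: real and \<theta>0 :: "nat \<Rightarrow> nat \<Rightarrow> real" and M :: "'a measure" and Z
    assume "signal_threshold p \<le> lam" "prob_space M" "\<forall>n\<ge>1. sqnorm n (\<theta>0 n) = 1"
      "\<forall>n\<ge>1. prob_space.indep_vars M (\<lambda>_. borel) (\<lambda>xs \<omega>. Z n \<omega> xs) (tensor_idx p n)"
      "\<forall>n\<ge>1. \<forall>xs\<in>tensor_idx p n. distributed M lborel (\<lambda>\<omega>. Z n \<omega> xs) std_normal_density"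
    then show "AE \<omega> in M. (\<lambda>n. posterior p n lam (obs p n lam (\<theta>0 n) (Z n \<omega>))
                               (T_set p n (\<theta>0 n) (s lam))) \<longlonglongrightarrow> 1"
      unfolding s_def by (rule AE_posterior_tendsto_1_above_threshold[OF p])
  qed
qed

end
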